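(* Consider the network system of the context and assume every subsystem $G_i\in\mathcal{RH}_\infty$. Then the entire network system (subsystems $G_1,\dots,G_N$, interaction $\boldsymbol v=\boldsymbol L\boldsymbol w$, decentralized controller $u_i=K_iy_i$) is internally stable for every interaction $\boldsymbol L$ such that the preexisting system $\boldsymbol G_{\rm pre}$ is internally stable if and only if each $K_i$, $i=1,\dots,N$, is a retrofit controller for $G_i$, i.e. (equivalently) $K_i=(I+Q_iG_{y_iu_i})^{-1}Q_i$ for some $Q_i\in\mathcal{RH}_\infty$ with $G_{w_iu_i}Q_iG_{y_iv_i}=0$.
   Context: For $i=1,\dots,N$, subsystem $G_i$ is a proper real rational transfer matrix with inputs $(v_i,d_i,u_i)$ and outputs $(w_i,z_i,y_i)$, $G_{a_ib_i}$ denoting the block from $b_i$ to $a_i$. Stacked signals $\boldsymbol v=\mathrm{col}(v_1,\dots,v_N)$ etc.; the interaction is $\boldsymbol v=\boldsymbol L\boldsymbol w$ with $\boldsymbol L=[L_{ij}]$ an arbitrary proper real rational (possibly dynamic) transfer matrix; the decentralized controller is $\boldsymbol u=\boldsymbol K\boldsymbol y$, $\boldsymbol K=\mathrm{diag}(K_1,\dots,K_N)$. Let $\boldsymbol G_{\boldsymbol{wv}}:=\mathrm{diag}(G_{w_iv_i})$ and similarly for other blocks. The preexisting system $\boldsymbol G_{\rm pre}$ is the loop $\boldsymbol w=\boldsymbol G_{\boldsymbol{wv}}\boldsymbol v$, $\boldsymbol v=\boldsymbol L\boldsymbol w$. All feedback systems are well-posed; internal stability is standard. $\mathcal{RH}_\infty$: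 stable proper real rational transfer matrices. For a single subsystem $G$ (inputs $v,d,u$; outputs $w,z,y$), a controller $u=Ky$ is a retrofit controller if the feedback system of $G$, $u=Ky$, and $v=\overline{G}w$ is internally stable for every proper real rational $\overline{G}$ such that the loop $w=G_{wv}v$, $v=\overline{G}w$ is internally stable. *)

theory Defs
  imports "HOL-Computational_Algebra.Polynomial" "HOL-Computational_Algebra.Fraction_Field"
    "Jordan_Normal_Form.Matrix"
begin

text \<open>Real rational transfer functions in the Laplace variable s: the fraction field of real
  polynomials. Transfer matrices are Jordan_Normal_Form matrices over this field.\<close>

type_synonym tf = "real poly fract"

definition proper_tf :: "tf \<Rightarrow> bool" where
  "proper_tf r \<longleftrightarrow> (\<exists>p q. q \<noteq> 0 \<and> r = Fract p q \<and> degree p \<le> degree q)"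

text \<open>Membership in RH-infinity (continuous time): proper, all poles in the open left half-plane.\<close>
definition stable_tf :: "tf \<Rightarrow> bool" where
  "stable_tf r \<longleftrightarrow> (\<exists>p q. q \<noteq> 0 \<and> r = Fract p q \<and> degree p \<le> degree q \<and>
      (\<forall>z::complex. poly (map_poly complex_of_real q) z = 0 \<longrightarrow> Re z < 0))"

definition proper_mat :: "tf mat \<Rightarrow> bool" where
  "proper_mat A \<longleftrightarrow> (\<forall>i<dim_row A. \<forall>j<dim_col A. proper_tf (A $$ (i,j)))"

definition RH_inf :: "tf mat \<Rightarrow> bool" where
  "RH_inf A \<longleftrightarrow> (\<forall>i<dim_row A. \<forall>j<dim_col A. stable_tf (A $$ (i,j)))"

definition append_cols_mat :: "tf mat \<Rightarrow> tf mat \<Rightarrow> tf mat" where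
  "append_cols_mat A B = four_block_mat A B (0\<^sub>m 0 (dim_col A)) (0\<^sub>m 0 (dim_col B))"

definition blk :: "tf mat \<Rightarrow> nat \<Rightarrow> nat \<Rightarrow> nat \<Rightarrow> nat \<Rightarrow> tf mat" where
  "blk G r0 nr c0 nc = mat nr nc (\<lambda>(i,j). G $$ (r0 + i, c0 + j))"

fun diag_mats :: "nat \<Rightarrow> (nat \<Rightarrow> tf mat) \<Rightarrow> tf mat" where
  "diag_mats 0 f = 0\<^sub>m 0 0"
| "diag_mats (Suc n) f = (let A = diag_mats n f in
     four_block_mat A (0\<^sub>m (dim_row A) (dim_col (f n))) (0\<^sub>m (dim_row (f n)) (dim_col A)) (f n))"

text \<open>Internal stability of the feedback loop  b = M a + e2,  a = F b + e1  (M: nb x na,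
  F: na x nb): well-posed (the loop matrix is invertible over the rational functions) and
  the closed-loop map from (e1,e2) to (a,b) is in RH-infinity.\<close>
definition fb_stable :: "tf mat \<Rightarrow> tf mat \<Rightarrow> bool" where
  "fb_stable M F \<longleftrightarrow> (let na = dim_col M; nb = dim_row M;
      M0 = four_block_mat (1\<^sub>m na) (- F) (- M) (1\<^sub>m nb) in
      \<exists>T. T \<in> carrier_mat (na + nb) (na + nb) \<and> T * M0 = 1\<^sub>m (na + nb) \<and>
          M0 * T = 1\<^sub>m (na + nb) \<and> RH_inf T)"

text \<open>Internal stability of a plant with loop inputs a, exogenous inputs d, loop outputs b,
  exogenous outputs z:  b = Pba a + Pbd d + e2,  z = Pza a + Pzd d,  a = F b + e1.
  Well-posed and all transfer matrices from (e1,e2,d) to (a,b,z) in RH-infinity.\<close>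
definition int_stable :: "tf mat \<Rightarrow> tf mat \<Rightarrow> tf mat \<Rightarrow> tf mat \<Rightarrow> tf mat \<Rightarrow> bool" where
  "int_stable Pba Pbd Pza Pzd F \<longleftrightarrow> (let na = dim_col Pba; nb = dim_row Pba;
      nd = dim_col Pbd; nz = dim_row Pza;
      M0 = four_block_mat (1\<^sub>m na) (- F) (- Pba) (1\<^sub>m nb);
      E = (0\<^sub>m na nd) @\<^sub>r Pbd;
      Z = append_cols_mat Pza (0\<^sub>m nz nb) in
      \<exists>T. T \<in> carrier_mat (na + nb) (na + nb) \<and> T * M0 = 1\<^sub>m (na + nb) \<and>
          M0 * T = 1\<^sub>m (na + nb) \<and>
          RH_inf T \<and> RH_inf (T * E) \<and> RH_inf (Z * T) \<and> RH_inf (Z * T * E + Pzd))"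

text \<open>Plant given by its nine blocks (inputs (v,d,u), outputs (w,z,y)), closed by
  v = Lm w and u = Km y.\<close>
definition plant_loop_stable ::
  "tf mat \<Rightarrow> tf mat \<Rightarrow> tf mat \<Rightarrow> tf mat \<Rightarrow> tf mat \<Rightarrow> tf mat \<Rightarrow> tf mat \<Rightarrow> tf mat \<Rightarrow> tf mat
   \<Rightarrow> tf mat \<Rightarrow> tf mat \<Rightarrow> bool" where
  "plant_loop_stable Gwv Gwd Gwu Gzv Gzd Gzu Gyv Gyd Gyu Lm Km \<longleftrightarrow>
     int_stable (four_block_mat Gwv Gwu Gyv Gyu) (Gwd @\<^sub>r Gyd) (append_cols_mat Gzv Gzu) Gzd
       (four_block_mat Lm (0\<^sub>m (dim_row Lm) (dim_col Km)) (0\<^sub>m (dim_row Km) (dim_col Lm)) Km)"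

definition Gwv where "Gwv nw nz ny nv nd nu G = blk G 0 nw 0 nv"
definition Gwd where "Gwd nw nz ny nv nd nu G = blk G 0 nw nv nd"
definition Gwu where "Gwu nw nz ny nv nd nu G = blk G 0 nw (nv + nd) nu"
definition Gzv where "Gzv nw nz ny nv nd nu G = blk G nw nz 0 nv"
definition Gzd where "Gzd nw nz ny nv nd nu G = blk G nw nz nv nd"
definition Gzu where "Gzu nw nz ny nv nd nu G = blk G nw nz (nv + nd) nu"
definition Gyv where "Gyv nw nz ny nv nd nu G = blk G (nw + nz) ny 0 nv"
definition Gyd where "Gyd nw nz ny nv nd nu G = blk G (nw + nz) ny nv nd"
definition Gyu where "Gyu nw nz ny nv nd nu G = blk G (nw + nz) ny (nv + nd) nu"

definition retrofit :: "nat \<Rightarrow> nat \<Rightarrow> nat \<Rightarrow> nat \<Rightarrow> nat \<Rightarrow> nat \<Rightarrow> tf mat \<Rightarrow> tf mat \<Rightarrow> bool" where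
  "retrofit nw nz ny nv nd nu G K \<longleftrightarrow>
    (\<forall>Gbar. Gbar \<in> carrier_mat nv nw \<and> proper_mat Gbar \<and> fb_stable (Gwv nw nz ny nv nd nu G) Gbar
       \<longrightarrow> plant_loop_stable (Gwv nw nz ny nv nd nu G) (Gwd nw nz ny nv nd nu G)
             (Gwu nw nz ny nv nd nu G) (Gzv nw nz ny nv nd nu G) (Gzd nw nz ny nv nd nu G)
             (Gzu nw nz ny nv nd nu G) (Gyv nw nz ny nv nd nu G) (Gyd nw nz ny nv nd nu G)
             (Gyu nw nz ny nv nd nu G) Gbar K)"

definition diagG where
  "diagG N nw nz ny nv nd nu G B =
     diag_mats N (\<lambda>i. B (nw i) (nz i) (ny i) (nv i) (nd i) (nu i) (G i))"

definition network_stable ::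
  "nat \<Rightarrow> (nat \<Rightarrow> nat) \<Rightarrow> (nat \<Rightarrow> nat) \<Rightarrow> (nat \<Rightarrow> nat) \<Rightarrow> (nat \<Rightarrow> nat) \<Rightarrow> (nat \<Rightarrow> nat)
   \<Rightarrow> (nat \<Rightarrow> nat) \<Rightarrow> (nat \<Rightarrow> tf mat) \<Rightarrow> (nat \<Rightarrow> tf mat) \<Rightarrow> tf mat \<Rightarrow> bool" where
  "network_stable N nw nz ny nv nd nu G K L \<longleftrightarrow>
     plant_loop_stable (diagG N nw nz ny nv nd nu G Gwv) (diagG N nw nz ny nv nd nu G Gwd)
       (diagG N nw nz ny nv nd nu G Gwu) (diagG N nw nz ny nv nd nu G Gzv)
       (diagG N nw nz ny nv nd nu G Gzd) (diagG N nw nz ny nv nd nu G Gzu)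
       (diagG N nw nz ny nv nd nu G Gyv) (diagG N nw nz ny nv nd nu G Gyd)
       (diagG N nw nz ny nv nd nu G Gyu) L (diag_mats N K)"

text \<open>Preexisting system: w = Gwv v, v = L w.\<close>
definition pre_stable ::
  "nat \<Rightarrow> (nat \<Rightarrow> nat) \<Rightarrow> (nat \<Rightarrow> nat) \<Rightarrow> (nat \<Rightarrow> nat) \<Rightarrow> (nat \<Rightarrow> nat) \<Rightarrow> (nat \<Rightarrow> nat)
   \<Rightarrow> (nat \<Rightarrow> nat) \<Rightarrow> (nat \<Rightarrow> tf mat) \<Rightarrow> tf mat \<Rightarrow> bool" where
  "pre_stable N nw nz ny nv nd nu G L \<longleftrightarrow> fb_stable (diagG N nw nz ny nv nd nu G Gwv) L"

end

theory Submission
  imports Defs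
begin

text \<open>Every stability question is rephrased as the existence of a stable closed-loop map
  Q = inverse (I - F M) F of a feedback loop. If the Youla parameter Q_i of K_i satisfies
  G_wu Q_i G_yv = 0, closing the local loop leaves the interaction facing the unchanged G_wv, so
  the closed-loop map of the whole network is written down from those of the preexisting system
  and of the local loops. Conversely, if G_wu Q_i G_yv is nonzero, a single proper scalar
  interaction gain that stabilizes G_wv destabilizes G_wv + G_wu Q_i G_yv: it puts a closed-loop
  pole at a point s0 > 0. All blocks of the network are block diagonal, so the network condition
  splits into the conditions for the single subsystems, i.e. into the retrofit conditions.\<close>

section \<open>Stable transfer functions\<close>

definition hurwitz :: "real poly \<Rightarrow> bool" where
  "hurwitz q \<longleftrightarrow> (\<forall>z::complex. poly (map_poly of_real q) z = 0 \<longrightarrow> Re z < 0)"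

lemma hurwitz_neq_0: "hurwitz q \<Longrightarrow> q \<noteq> 0"
  by (auto simp: hurwitz_def dest: spec[of _ 0])

lemma stable_tf_iff_hurwitz:
  "stable_tf r \<longleftrightarrow> (\<exists>p q. r = Fract p q \<and> degree p \<le> degree q \<and> hurwitz q)"
  unfolding stable_tf_def using hurwitz_neq_0 unfolding hurwitz_def by blast

lemma poly_map_poly_of_real: "poly (map_poly of_real p) (of_real x :: complex) = of_real (poly p x)"
  by (induction p) (auto simp: map_poly_pCons)

lemma map_poly_of_real_mult:
  "map_poly (of_real :: real \<Rightarrow> complex) (p * q) = map_poly of_real p * map_poly of_real q"
proof (induction p)
  case (pCons a p)
  have "pCons a p * q = Polynomial.smult a q + pCons 0 (p * q)" by simp
  moreover have "map_poly (of_real :: real \<Rightarrow> complex) (p + q) = map_poly of_real p + map_poly of_real q"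
    for p q by (rule poly_eqI) (simp add: coeff_map_poly)
  ultimately show ?case using pCons by (simp add: map_poly_smult map_poly_pCons)
qed simp

lemma hurwitz_mult: "hurwitz p \<Longrightarrow> hurwitz q \<Longrightarrow> hurwitz (p * q)"
  by (simp add: hurwitz_def map_poly_of_real_mult)

lemma hurwitz_1 [simp]: "hurwitz 1"
  by (simp add: hurwitz_def)

lemma hurwitz_s_plus_1 [simp]: "hurwitz [:1, 1:]"
  by (auto simp: hurwitz_def map_poly_pCons add_eq_0_iff)

lemma hurwitz_poly_neq_0: "hurwitz q \<Longrightarrow> (x::real) \<ge> 0 \<Longrightarrow> poly q x \<noteq> 0"
  unfolding hurwitz_def by (metis Re_complex_of_real not_less of_real_0 poly_map_poly_of_real)

lemma stable_tf_0 [simp]: "stable_tf 0"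
  unfolding stable_tf_iff_hurwitz by (rule exI[of _ 0], rule exI[of _ 1]) (simp add: Zero_fract_def)

lemma stable_tf_1 [simp]: "stable_tf 1"
  unfolding stable_tf_iff_hurwitz by (rule exI[of _ 1], rule exI[of _ 1]) (simp add: One_fract_def)

lemma stable_tf_const_over_s_plus_1: "stable_tf (Fract [:c:] [:1, 1:])"
  unfolding stable_tf_iff_hurwitz by (intro exI[of _ "[:c:]"] exI[of _ "[:1, 1:]"]) simp

lemma stable_tf_add:
  assumes "stable_tf a" "stable_tf b" shows "stable_tf (a + b)"
proof -
  from assms obtain p q p' q' where a: "a = Fract p q" "degree p \<le> degree q" "hurwitz q"
    and b: "b = Fract p' q'" "degree p' \<le> degree q'" "hurwitz q'"
    unfolding stable_tf_iff_hurwitz by blast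
  then have nz: "q \<noteq> 0" "q' \<noteq> 0" by (simp_all add: hurwitz_neq_0)
  have "degree (p * q' + p' * q) \<le> degree (q * q')"
    using degree_add_le[of "p * q'" "degree q + degree q'" "p' * q"]
      degree_mult_le[of p q'] degree_mult_le[of p' q] a b nz by (simp add: degree_mult_eq)
  moreover have "a + b = Fract (p * q' + p' * q) (q * q')" using a b nz by simp
  ultimately show ?thesis
    unfolding stable_tf_iff_hurwitz using a b hurwitz_mult by blast
qed

lemma stable_tf_mult:
  assumes "stable_tf a" "stable_tf b" shows "stable_tf (a * b)"
proof -
  from assms obtain p q p' q' where a: "a = Fract p q" "degree p \<le> degree q" "hurwitz q"
    and b: "b = Fract p' q'" "degree p' \<le> degree q'" "hurwitz q'"
    unfolding stable_tf_iff_hurwitz by blast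
  then have nz: "q \<noteq> 0" "q' \<noteq> 0" by (simp_all add: hurwitz_neq_0)
  have "degree (p * p') \<le> degree (q * q')"
    using degree_mult_le[of p p'] a b nz by (simp add: degree_mult_eq)
  moreover have "a * b = Fract (p * p') (q * q')" using a b by simp
  ultimately show ?thesis
    unfolding stable_tf_iff_hurwitz using a b hurwitz_mult by blast
qed

lemma stable_tf_sum: "(\<And>i. i \<in> A \<Longrightarrow> stable_tf (f i)) \<Longrightarrow> stable_tf (sum f A)"
  by (induction A rule: infinite_finite_induct) (auto intro: stable_tf_add)

lemma proper_tf_0 [simp]: "proper_tf 0"
  unfolding proper_tf_def by (rule exI[of _ 0], rule exI[of _ 1]) (simp add: Zero_fract_def)

lemma RH_infI: "(\<And>i j. i < dim_row A \<Longrightarrow> j < dim_col A \<Longrightarrow> stable_tf (A $$ (i,j))) \<Longrightarrow> RH_inf A"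
  unfolding RH_inf_def by auto

lemma RH_infD: "RH_inf A \<Longrightarrow> i < dim_row A \<Longrightarrow> j < dim_col A \<Longrightarrow> stable_tf (A $$ (i,j))"
  unfolding RH_inf_def by auto

lemma RH_inf_mult: "RH_inf A \<Longrightarrow> RH_inf B \<Longrightarrow> dim_col A = dim_row B \<Longrightarrow> RH_inf (A * B)"
  by (rule RH_infI)
    (auto simp: scalar_prod_def intro!: stable_tf_sum stable_tf_mult RH_infD)

lemma RH_inf_add:
  "RH_inf A \<Longrightarrow> RH_inf B \<Longrightarrow> dim_row A = dim_row B \<Longrightarrow> dim_col A = dim_col B \<Longrightarrow> RH_inf (A + B)"
  by (rule RH_infI) (simp add: RH_infD stable_tf_add)

lemma RH_inf_zero [simp]: "RH_inf (0\<^sub>m n m)"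
  by (rule RH_infI) auto

lemma RH_inf_one [simp]: "RH_inf (1\<^sub>m n)"
  by (rule RH_infI) auto

lemma RH_inf_four_block_mat:
  assumes "dim_row A = dim_row B" "dim_col A = dim_col C" "dim_row C = dim_row D" "dim_col B = dim_col D"
  shows "RH_inf (four_block_mat A B C D) \<longleftrightarrow> RH_inf A \<and> RH_inf B \<and> RH_inf C \<and> RH_inf D"
proof
  assume H: "RH_inf (four_block_mat A B C D)"
  show "RH_inf A \<and> RH_inf B \<and> RH_inf C \<and> RH_inf D"
  proof (intro conjI RH_infI)
    fix i j assume "i < dim_row A" "j < dim_col A"
    then show "stable_tf (A $$ (i,j))" using RH_infD[OF H, of i j] assms by simp
  next
    fix i j assume "i < dim_row B" "j < dim_col B"
    then show "stable_tf (B $$ (i,j))" using RH_infD[OF H, of i "j + dim_col A"] assms by simp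
  next
    fix i j assume "i < dim_row C" "j < dim_col C"
    then show "stable_tf (C $$ (i,j))" using RH_infD[OF H, of "i + dim_row A" j] assms by simp
  next
    fix i j assume "i < dim_row D" "j < dim_col D"
    then show "stable_tf (D $$ (i,j))" using RH_infD[OF H, of "i + dim_row A" "j + dim_col A"] assms by simp
  qed
next
  assume "RH_inf A \<and> RH_inf B \<and> RH_inf C \<and> RH_inf D"
  then show "RH_inf (four_block_mat A B C D)" by (intro RH_infI) (auto simp: assms intro: RH_infD)
qed

lemma RH_inf_blk: "RH_inf G \<Longrightarrow> r + nr \<le> dim_row G \<Longrightarrow> c + nc \<le> dim_col G \<Longrightarrow> RH_inf (blk G r nr c nc)"
  unfolding blk_def by (rule RH_infI) (auto intro: RH_infD)

lemma RH_inf_append_rows: "RH_inf A \<Longrightarrow> RH_inf B \<Longrightarrow> dim_col A = dim_col B \<Longrightarrow> RH_inf (A @\<^sub>r B)"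
  unfolding append_rows_def by (rule RH_infI) (auto intro: RH_infD)

lemma RH_inf_append_cols_mat:
  "RH_inf A \<Longrightarrow> RH_inf B \<Longrightarrow> dim_row A = dim_row B \<Longrightarrow> RH_inf (append_cols_mat A B)"
  unfolding append_cols_mat_def by (rule RH_infI) (auto intro: RH_infD)

lemma append_cols_mat_carrier [simp]:
  "A \<in> carrier_mat n m1 \<Longrightarrow> B \<in> carrier_mat n m2 \<Longrightarrow> append_cols_mat A B \<in> carrier_mat n (m1 + m2)"
  unfolding append_cols_mat_def carrier_mat_def by simp

lemma blk_carrier [simp]: "blk G r nr c nc \<in> carrier_mat nr nc"
  unfolding blk_def by auto

section \<open>Ring laws for matrices of matching dimensions\<close>

lemma mat_mult_assoc:
  "dim_col A = dim_row B \<Longrightarrow> dim_col B = dim_row C \<Longrightarrow> (A :: 'a :: semiring_0 mat) * B * C = A * (B * C)"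
  by (rule assoc_mult_mat[of _ "dim_row A" "dim_col A" _ "dim_col B" _ "dim_col C"]) auto

lemma mat_mult_add_distrib_left:
  "dim_col A = dim_row B \<Longrightarrow> dim_row B = dim_row C \<Longrightarrow> dim_col B = dim_col C \<Longrightarrow>
   (A :: 'a :: semiring_0 mat) * (B + C) = A * B + A * C"
  by (rule mult_add_distrib_mat[of _ "dim_row A" "dim_col A" _ "dim_col B"]) auto

lemma mat_mult_add_distrib_right:
  "dim_row A = dim_row B \<Longrightarrow> dim_col A = dim_col B \<Longrightarrow> dim_col A = dim_row C \<Longrightarrow>
   ((A :: 'a :: semiring_0 mat) + B) * C = A * C + B * C"
  by (rule add_mult_distrib_mat[of _ "dim_row A" "dim_col A" _ _ "dim_col C"]) auto

lemma mat_add_assoc: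
  "dim_row A = dim_row B \<Longrightarrow> dim_col A = dim_col B \<Longrightarrow> dim_row B = dim_row C \<Longrightarrow> dim_col B = dim_col C \<Longrightarrow>
   ((A :: 'a :: monoid_add mat) + B) + C = A + (B + C)"
  by (rule assoc_add_mat[of _ "dim_row A" "dim_col A"]) auto

lemma mat_add_commute:
  "dim_row A = dim_row B \<Longrightarrow> dim_col A = dim_col B \<Longrightarrow> (A :: 'a :: comm_monoid_add mat) + B = B + A"
  by (rule comm_add_mat[of _ "dim_row A" "dim_col A"]) auto

lemma mat_add_left_commute:
  "dim_row A = dim_row B \<Longrightarrow> dim_col A = dim_col B \<Longrightarrow> dim_row B = dim_row C \<Longrightarrow> dim_col B = dim_col C \<Longrightarrow>
   (A :: 'a :: comm_monoid_add mat) + (B + C) = B + (A + C)"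
  by (metis mat_add_assoc mat_add_commute)

lemma mat_uminus_add:
  "dim_row A = dim_row B \<Longrightarrow> dim_col A = dim_col B \<Longrightarrow> - ((A :: 'a :: ab_group_add mat) + B) = - A + - B"
  by (rule eq_matI) auto

lemma mat_add_uminus_add_cancel:
  "dim_row A = dim_row B \<Longrightarrow> dim_col A = dim_col B \<Longrightarrow> (A :: 'a :: group_add mat) + (- A + B) = B"
  by (rule eq_matI) auto

lemma mat_uminus_add_add_cancel:
  "dim_row A = dim_row B \<Longrightarrow> dim_col A = dim_col B \<Longrightarrow> - (A :: 'a :: group_add mat) + (A + B) = B"
  by (rule eq_matI) auto

lemma mat_add_uminus_self: "(A :: 'a :: group_add mat) + - A = 0\<^sub>m (dim_row A) (dim_col A)"
  by (rule eq_matI) auto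

lemma mat_uminus_add_self: "- (A :: 'a :: group_add mat) + A = 0\<^sub>m (dim_row A) (dim_col A)"
  by (rule eq_matI) auto

lemma mat_add_zero_right: "dim_row A = n \<Longrightarrow> dim_col A = m \<Longrightarrow> (A :: 'a :: monoid_add mat) + 0\<^sub>m n m = A"
  by (rule eq_matI) auto

lemma mat_add_zero_left: "dim_row A = n \<Longrightarrow> dim_col A = m \<Longrightarrow> 0\<^sub>m n m + (A :: 'a :: monoid_add mat) = A"
  by (rule eq_matI) auto

lemma mat_uminus_zero: "- 0\<^sub>m n m = (0\<^sub>m n m :: 'a :: group_add mat)"
  by (rule eq_matI) auto

lemmas mat_ring_simps = mat_mult_assoc mat_mult_add_distrib_left mat_mult_add_distrib_right
  mat_add_assoc mat_add_commute mat_add_left_commute mat_uminus_add mat_add_uminus_add_cancel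
  mat_uminus_add_add_cancel mat_add_uminus_self mat_uminus_add_self mat_add_zero_right
  mat_add_zero_left mat_uminus_zero

lemma mat_eq_add_if_add_uminus_eq:
  "(X :: 'a :: ab_group_add mat) + - Y = Z \<Longrightarrow> dim_row X = dim_row Y \<Longrightarrow> dim_col X = dim_col Y \<Longrightarrow> X = Z + Y"
  by (auto intro!: eq_matI)

lemma mat_eq_add_if_uminus_add_eq:
  "- Y + (X :: 'a :: ab_group_add mat) = Z \<Longrightarrow> dim_row X = dim_row Y \<Longrightarrow> dim_col X = dim_col Y \<Longrightarrow> X = Z + Y"
  by (auto intro!: eq_matI)

lemma four_block_mat_inject:
  assumes "A \<in> carrier_mat n1 m1" "B \<in> carrier_mat n1 m2" "C \<in> carrier_mat n2 m1" "D \<in> carrier_mat n2 m2"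
    "A' \<in> carrier_mat n1 m1" "B' \<in> carrier_mat n1 m2" "C' \<in> carrier_mat n2 m1" "D' \<in> carrier_mat n2 m2"
  shows "four_block_mat A B C D = four_block_mat A' B' C' D' \<longleftrightarrow> A = A' \<and> B = B' \<and> C = C' \<and> D = D'"
proof
  assume eq: "four_block_mat A B C D = four_block_mat A' B' C' D'"
  show "A = A' \<and> B = B' \<and> C = C' \<and> D = D'"
  proof (intro conjI eq_matI)
    fix i j
    note e = arg_cong[OF eq, of "\<lambda>X. X $$ (i, j)"] arg_cong[OF eq, of "\<lambda>X. X $$ (i, j + m1)"]
      arg_cong[OF eq, of "\<lambda>X. X $$ (i + n1, j)"] arg_cong[OF eq, of "\<lambda>X. X $$ (i + n1, j + m1)"]
    note dims = assms[unfolded carrier_mat_def, simplified]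
    show "A $$ (i, j) = A' $$ (i, j)" if "i < dim_row A'" "j < dim_col A'" using that e(1) dims by simp
    show "B $$ (i, j) = B' $$ (i, j)" if "i < dim_row B'" "j < dim_col B'" using that e(2) dims by simp
    show "C $$ (i, j) = C' $$ (i, j)" if "i < dim_row C'" "j < dim_col C'" using that e(3) dims by simp
    show "D $$ (i, j) = D' $$ (i, j)" if "i < dim_row D'" "j < dim_col D'" using that e(4) dims by simp
  qed (use assms in auto)
qed simp

section \<open>Closed-loop maps\<close>

text \<open>For the loop  b = M a + e2,  a = F b + e1  the map from e2 to a is
  Q = inverse (I - F M) F = F inverse (I - M F). The two equations below say this without inverses;
  they imply that I + Q M is a two-sided inverse of I - F M.\<close>

definition loop_map :: "'a :: semiring_0 mat \<Rightarrow> 'a mat \<Rightarrow> 'a mat \<Rightarrow> bool" where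
  "loop_map F M Q \<longleftrightarrow> Q = F + F * M * Q \<and> Q = F + Q * M * F"

lemma loop_mat_inverse_if_loop_map:
  fixes F M Q :: "'a :: ring_1 mat"
  assumes F: "F \<in> carrier_mat na nb" and M: "M \<in> carrier_mat nb na" and Q: "Q \<in> carrier_mat na nb"
    and "loop_map F M Q"
  defines "T \<equiv> four_block_mat (1\<^sub>m na + Q * M) Q (M + M * Q * M) (1\<^sub>m nb + M * Q)"
  shows "T * four_block_mat (1\<^sub>m na) (- F) (- M) (1\<^sub>m nb) = 1\<^sub>m (na + nb)"
    and "four_block_mat (1\<^sub>m na) (- F) (- M) (1\<^sub>m nb) * T = 1\<^sub>m (na + nb)"
proof -
  obtain e1: "Q = F + F * M * Q" and e2: "Q = F + Q * M * F"
    using \<open>loop_map F M Q\<close> unfolding loop_map_def by blast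
  have z1: "Q + - F + - (F * M * Q) = 0\<^sub>m na nb"
    by (subst e1) (use F M Q in \<open>simp add: mat_ring_simps\<close>)
  have z2: "Q + - F + - (Q * M * F) = 0\<^sub>m na nb"
    by (subst e2) (use F M Q in \<open>simp add: mat_ring_simps\<close>)
  have "T * four_block_mat (1\<^sub>m na) (- F) (- M) (1\<^sub>m nb) =
    four_block_mat ((1\<^sub>m na + Q * M) * 1\<^sub>m na + Q * - M) ((1\<^sub>m na + Q * M) * - F + Q * 1\<^sub>m nb)
       ((M + M * Q * M) * 1\<^sub>m na + (1\<^sub>m nb + M * Q) * - M) ((M + M * Q * M) * - F + (1\<^sub>m nb + M * Q) * 1\<^sub>m nb)"
    unfolding T_def by (rule mult_four_block_mat) (use M Q F in auto)
  also have "\<dots> = four_block_mat (1\<^sub>m na) (0\<^sub>m na nb) (0\<^sub>m nb na) (1\<^sub>m nb)"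
  proof (rule cong_four_block_mat)
    show "(1\<^sub>m na + Q * M) * 1\<^sub>m na + Q * - M = 1\<^sub>m na" using M Q by (simp add: mat_ring_simps)
    have "(1\<^sub>m na + Q * M) * - F + Q * 1\<^sub>m nb = Q + - F + - (Q * M * F)"
      using M Q F by (simp add: mat_ring_simps)
    then show "(1\<^sub>m na + Q * M) * - F + Q * 1\<^sub>m nb = 0\<^sub>m na nb" using z2 by simp
    show "(M + M * Q * M) * 1\<^sub>m na + (1\<^sub>m nb + M * Q) * - M = 0\<^sub>m nb na"
      using M Q by (simp add: mat_ring_simps)
    have "(M + M * Q * M) * - F + (1\<^sub>m nb + M * Q) * 1\<^sub>m nb = 1\<^sub>m nb + M * (Q + - F + - (Q * M * F))"
      using M Q F by (simp add: mat_ring_simps)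
    then show "(M + M * Q * M) * - F + (1\<^sub>m nb + M * Q) * 1\<^sub>m nb = 1\<^sub>m nb" using z2 M by simp
  qed
  finally show "T * four_block_mat (1\<^sub>m na) (- F) (- M) (1\<^sub>m nb) = 1\<^sub>m (na + nb)" by simp
  have "four_block_mat (1\<^sub>m na) (- F) (- M) (1\<^sub>m nb) * T =
    four_block_mat (1\<^sub>m na * (1\<^sub>m na + Q * M) + - F * (M + M * Q * M)) (1\<^sub>m na * Q + - F * (1\<^sub>m nb + M * Q))
       (- M * (1\<^sub>m na + Q * M) + 1\<^sub>m nb * (M + M * Q * M)) (- M * Q + 1\<^sub>m nb * (1\<^sub>m nb + M * Q))"
    unfolding T_def by (rule mult_four_block_mat) (use M Q F in auto)
  also have "\<dots> = four_block_mat (1\<^sub>m na) (0\<^sub>m na nb) (0\<^sub>m nb na) (1\<^sub>m nb)"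
  proof (rule cong_four_block_mat)
    have "1\<^sub>m na * (1\<^sub>m na + Q * M) + - F * (M + M * Q * M) = 1\<^sub>m na + (Q + - F + - (F * M * Q)) * M"
      using M Q F by (simp add: mat_ring_simps)
    then show "1\<^sub>m na * (1\<^sub>m na + Q * M) + - F * (M + M * Q * M) = 1\<^sub>m na" using z1 M by simp
    have "1\<^sub>m na * Q + - F * (1\<^sub>m nb + M * Q) = Q + - F + - (F * M * Q)"
      using M Q F by (simp add: mat_ring_simps)
    then show "1\<^sub>m na * Q + - F * (1\<^sub>m nb + M * Q) = 0\<^sub>m na nb" using z1 by simp
    show "- M * (1\<^sub>m na + Q * M) + 1\<^sub>m nb * (M + M * Q * M) = 0\<^sub>m nb na"
      using M Q by (simp add: mat_ring_simps)
    show "- M * Q + 1\<^sub>m nb * (1\<^sub>m nb + M * Q) = 1\<^sub>m nb" using M Q by (simp add: mat_ring_simps)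
  qed
  finally show "four_block_mat (1\<^sub>m na) (- F) (- M) (1\<^sub>m nb) * T = 1\<^sub>m (na + nb)" by simp
qed

lemma loop_map_if_loop_mat_inverse:
  fixes F M T :: "'a :: ring_1 mat"
  assumes F: "F \<in> carrier_mat na nb" and M: "M \<in> carrier_mat nb na"
    and T: "T \<in> carrier_mat (na + nb) (na + nb)"
    and left: "T * four_block_mat (1\<^sub>m na) (- F) (- M) (1\<^sub>m nb) = 1\<^sub>m (na + nb)"
    and right: "four_block_mat (1\<^sub>m na) (- F) (- M) (1\<^sub>m nb) * T = 1\<^sub>m (na + nb)"
    and split: "split_block T na na = (T1, T2, T3, T4)"
  shows "loop_map F M T2"
proof -
  note blocks = split_block[OF split, of nb nb]
  have T1: "T1 \<in> carrier_mat na na" and T2: "T2 \<in> carrier_mat na nb" and T3: "T3 \<in> carrier_mat nb na"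
    and T4: "T4 \<in> carrier_mat nb nb" and T_eq: "T = four_block_mat T1 T2 T3 T4"
    using blocks T by auto
  have "four_block_mat (1\<^sub>m na * T1 + - F * T3) (1\<^sub>m na * T2 + - F * T4) (- M * T1 + 1\<^sub>m nb * T3)
      (- M * T2 + 1\<^sub>m nb * T4) = four_block_mat (1\<^sub>m na) (0\<^sub>m na nb) (0\<^sub>m nb na) (1\<^sub>m nb)"
    using right unfolding T_eq
    by (subst (asm) mult_four_block_mat[of _ na na _ nb _ nb _ _ na _ nb]) (use T1 T2 T3 T4 M F in auto)
  from four_block_mat_inject[THEN iffD1, OF _ _ _ _ _ _ _ _ this, of na na nb nb] T1 T2 T3 T4 M F
  have r2: "T2 + - (F * T4) = 0\<^sub>m na nb" and r4: "- (M * T2) + T4 = 1\<^sub>m nb" by auto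
  have "four_block_mat (T1 * 1\<^sub>m na + T2 * - M) (T1 * - F + T2 * 1\<^sub>m nb) (T3 * 1\<^sub>m na + T4 * - M)
      (T3 * - F + T4 * 1\<^sub>m nb) = four_block_mat (1\<^sub>m na) (0\<^sub>m na nb) (0\<^sub>m nb na) (1\<^sub>m nb)"
    using left unfolding T_eq
    by (subst (asm) mult_four_block_mat[of _ na na _ nb _ nb _ _ na _ nb]) (use T1 T2 T3 T4 M F in auto)
  from four_block_mat_inject[THEN iffD1, OF _ _ _ _ _ _ _ _ this, of na na nb nb] T1 T2 T3 T4 M F
  have l1: "T1 + - (T2 * M) = 1\<^sub>m na" and l2: "- (T1 * F) + T2 = 0\<^sub>m na nb" by auto
  have "T2 = F * T4" using mat_eq_add_if_add_uminus_eq[OF r2] T2 T4 F by (simp add: mat_ring_simps)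
  also have "T4 = 1\<^sub>m nb + M * T2" using mat_eq_add_if_uminus_add_eq[OF r4] T2 T4 M by simp
  also have "F * (1\<^sub>m nb + M * T2) = F + F * M * T2" using F M T2 by (simp add: mat_ring_simps)
  finally have "T2 = F + F * M * T2" .
  have "T2 = T1 * F" using mat_eq_add_if_uminus_add_eq[OF l2] T1 T2 F by (simp add: mat_ring_simps)
  also have "T1 = 1\<^sub>m na + T2 * M" using mat_eq_add_if_add_uminus_eq[OF l1] T1 T2 M by simp
  also have "(1\<^sub>m na + T2 * M) * F = F + T2 * M * F" using F M T2 by (simp add: mat_ring_simps)
  finally have "T2 = F + T2 * M * F" .
  with \<open>T2 = F + F * M * T2\<close> show ?thesis unfolding loop_map_def ..
qed

lemma fb_stable_iff_loop_map:
  assumes F: "F \<in> carrier_mat na nb" and M: "M \<in> carrier_mat nb na" and "RH_inf M"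
  shows "fb_stable M F \<longleftrightarrow> (\<exists>Q \<in> carrier_mat na nb. RH_inf Q \<and> loop_map F M Q)"
proof
  assume "fb_stable M F"
  then obtain T where T: "T \<in> carrier_mat (na + nb) (na + nb)" and "RH_inf T"
    and "T * four_block_mat (1\<^sub>m na) (- F) (- M) (1\<^sub>m nb) = 1\<^sub>m (na + nb)"
    and "four_block_mat (1\<^sub>m na) (- F) (- M) (1\<^sub>m nb) * T = 1\<^sub>m (na + nb)"
    unfolding fb_stable_def Let_def using M by auto
  moreover obtain T1 T2 T3 T4 where split: "split_block T na na = (T1, T2, T3, T4)"
    by (metis prod_cases4)
  ultimately have "loop_map F M T2" by (intro loop_map_if_loop_mat_inverse[OF F M])
  moreover have "T2 \<in> carrier_mat na nb" and "RH_inf T2"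
    using split_block[OF split, of nb nb] T \<open>RH_inf T\<close> by (auto simp: RH_inf_four_block_mat)
  ultimately show "\<exists>Q \<in> carrier_mat na nb. RH_inf Q \<and> loop_map F M Q" by blast
next
  assume "\<exists>Q \<in> carrier_mat na nb. RH_inf Q \<and> loop_map F M Q"
  then obtain Q where Q: "Q \<in> carrier_mat na nb" "RH_inf Q" "loop_map F M Q" by blast
  define T where "T = four_block_mat (1\<^sub>m na + Q * M) Q (M + M * Q * M) (1\<^sub>m nb + M * Q)"
  have "T \<in> carrier_mat (na + nb) (na + nb)" unfolding T_def using M Q by auto
  moreover have "RH_inf T" unfolding T_def using M Q \<open>RH_inf M\<close>
    by (subst RH_inf_four_block_mat) (auto intro!: RH_inf_add RH_inf_mult)
  ultimately show "fb_stable M F"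
    using loop_mat_inverse_if_loop_map[OF F M Q(1,3)] M unfolding fb_stable_def Let_def T_def by auto
qed

section \<open>Block-diagonal feedback\<close>

definition block_diag :: "'a :: zero mat \<Rightarrow> 'a mat \<Rightarrow> 'a mat" where
  "block_diag L K = four_block_mat L (0\<^sub>m (dim_row L) (dim_col K)) (0\<^sub>m (dim_row K) (dim_col L)) K"

lemma block_diag_carrier [simp]:
  "L \<in> carrier_mat n1 m1 \<Longrightarrow> K \<in> carrier_mat n2 m2 \<Longrightarrow> block_diag L K \<in> carrier_mat (n1 + n2) (m1 + m2)"
  unfolding block_diag_def by auto

lemma RH_inf_block_diag: "RH_inf (block_diag X Y) \<longleftrightarrow> RH_inf X \<and> RH_inf Y"
  unfolding block_diag_def by (subst RH_inf_four_block_mat) auto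

lemma block_diag_mult_four_block_mat:
  fixes X Y :: "'a :: semiring_0 mat"
  assumes "X \<in> carrier_mat a1 b1" "Y \<in> carrier_mat a2 b2"
    "Q1 \<in> carrier_mat b1 c1" "Q2 \<in> carrier_mat b1 c2" "Q3 \<in> carrier_mat b2 c1" "Q4 \<in> carrier_mat b2 c2"
  shows "block_diag X Y * four_block_mat Q1 Q2 Q3 Q4 = four_block_mat (X * Q1) (X * Q2) (Y * Q3) (Y * Q4)"
  unfolding block_diag_def using assms
  by (subst mult_four_block_mat[of _ a1 b1 _ b2 _ a2 _ _ c1 _ c2]) (auto simp: mat_ring_simps)

lemma four_block_mat_mult_block_diag:
  fixes X Y :: "'a :: semiring_0 mat"
  assumes "X \<in> carrier_mat b1 c1" "Y \<in> carrier_mat b2 c2"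
    "Q1 \<in> carrier_mat a1 b1" "Q2 \<in> carrier_mat a1 b2" "Q3 \<in> carrier_mat a2 b1" "Q4 \<in> carrier_mat a2 b2"
  shows "four_block_mat Q1 Q2 Q3 Q4 * block_diag X Y = four_block_mat (Q1 * X) (Q2 * Y) (Q3 * X) (Q4 * Y)"
  unfolding block_diag_def using assms
  by (subst mult_four_block_mat[of _ a1 b1 _ b2 _ a2 _ _ c1 _ c2]) (auto simp: mat_ring_simps)

lemma block_diag_add_four_block_mat:
  fixes X Y :: "'a :: monoid_add mat"
  assumes "X \<in> carrier_mat a1 b1" "Y \<in> carrier_mat a2 b2"
    "Q1 \<in> carrier_mat a1 b1" "Q2 \<in> carrier_mat a1 b2" "Q3 \<in> carrier_mat a2 b1" "Q4 \<in> carrier_mat a2 b2"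
  shows "block_diag X Y + four_block_mat Q1 Q2 Q3 Q4 = four_block_mat (X + Q1) Q2 Q3 (Y + Q4)"
  unfolding block_diag_def using assms
  by (subst add_four_block_mat[of _ a1 b1 _ b2 _ a2]) (auto simp: mat_ring_simps)

lemma block_diag_mult:
  fixes X1 Y1 :: "'a :: semiring_0 mat"
  assumes "X1 \<in> carrier_mat a1 b1" "X2 \<in> carrier_mat b1 c1" "Y1 \<in> carrier_mat a2 b2" "Y2 \<in> carrier_mat b2 c2"
  shows "block_diag X1 Y1 * block_diag X2 Y2 = block_diag (X1 * X2) (Y1 * Y2)"
  using assms unfolding block_diag_def[of X2 Y2]
  by (subst block_diag_mult_four_block_mat[of _ a1 b1 _ a2 b2 _ c1 _ c2])
    (auto simp: block_diag_def)

lemma block_diag_add: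
  fixes X1 Y1 :: "'a :: monoid_add mat"
  assumes "X1 \<in> carrier_mat a1 b1" "X2 \<in> carrier_mat a1 b1" "Y1 \<in> carrier_mat a2 b2" "Y2 \<in> carrier_mat a2 b2"
  shows "block_diag X1 Y1 + block_diag X2 Y2 = block_diag (X1 + X2) (Y1 + Y2)"
  using assms unfolding block_diag_def[of X2 Y2]
  by (subst block_diag_add_four_block_mat[of _ a1 b1 _ a2 b2]) (auto simp: block_diag_def)

lemma int_stable_iff_fb_stable:
  assumes Pba: "Pba \<in> carrier_mat nb na" and Pbd: "Pbd \<in> carrier_mat nb nd"
    and Pza: "Pza \<in> carrier_mat nz na" and Pzd: "Pzd \<in> carrier_mat nz nd"
    and "RH_inf Pbd" "RH_inf Pza" "RH_inf Pzd"
  shows "int_stable Pba Pbd Pza Pzd F \<longleftrightarrow> fb_stable Pba F"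
proof -
  define E where "E = 0\<^sub>m na nd @\<^sub>r Pbd"
  define Z where "Z = append_cols_mat Pza (0\<^sub>m nz nb)"
  have E: "E \<in> carrier_mat (na + nb) nd" and Z: "Z \<in> carrier_mat nz (na + nb)"
    unfolding E_def Z_def using Pbd Pza by auto
  have "RH_inf E" "RH_inf Z"
    unfolding E_def Z_def using assms by (auto intro!: RH_inf_append_rows RH_inf_append_cols_mat)
  then have exo: "RH_inf (T * E) \<and> RH_inf (Z * T) \<and> RH_inf (Z * T * E + Pzd)"
    if "T \<in> carrier_mat (na + nb) (na + nb)" "RH_inf T" for T
    using that E Z Pzd \<open>RH_inf Pzd\<close> by (auto intro!: RH_inf_mult RH_inf_add)
  have dims: "dim_col Pbd = nd" "dim_row Pza = nz" "dim_col Pba = na" "dim_row Pba = nb"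
    using Pba Pbd Pza by auto
  show ?thesis
    unfolding int_stable_def fb_stable_def Let_def dims E_def[symmetric] Z_def[symmetric]
    using exo by blast
qed

lemma loop_map_block_diag_left:
  fixes A B C D L K QL QK :: "'a :: ring_1 mat"
  assumes c: "A \<in> carrier_mat nw nv" "B \<in> carrier_mat nw nu" "C \<in> carrier_mat ny nv"
    "D \<in> carrier_mat ny nu" "L \<in> carrier_mat nv nw" "K \<in> carrier_mat nu ny"
    "QL \<in> carrier_mat nv nw" "QK \<in> carrier_mat nu ny"
    and e: "QL = L + L * A * QL" and k: "QK = K + K * D * QK" and z: "B * QK * C = 0\<^sub>m nw nv"
  defines "Q \<equiv> four_block_mat QL (QL * B * QK) (QK * C * QL) (QK + QK * C * QL * B * QK)"
  shows "Q = block_diag L K + block_diag L K * four_block_mat A B C D * Q"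
proof -
  have BQC: "B * (QK * (C * X)) = 0\<^sub>m nw (dim_col X)" if "dim_row X = nv" for X
  proof -
    have "B * (QK * (C * X)) = B * QK * C * X" using c that by (simp add: mat_ring_simps)
    then show ?thesis using z that by simp
  qed
  have "block_diag L K * four_block_mat A B C D * Q = four_block_mat (L * A) (L * B) (K * C) (K * D) * Q"
    using c by (simp add: block_diag_mult_four_block_mat)
  also have "\<dots> = four_block_mat (L * A * QL + L * B * (QK * C * QL))
      (L * A * (QL * B * QK) + L * B * (QK + QK * C * QL * B * QK))
      (K * C * QL + K * D * (QK * C * QL)) (K * C * (QL * B * QK) + K * D * (QK + QK * C * QL * B * QK))"
    (is "_ = four_block_mat ?X1 ?X2 ?X3 ?X4")
    unfolding Q_def using c by (subst mult_four_block_mat[of _ nv nv _ nu _ nu _ _ nw _ ny]) auto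
  finally have prod: "block_diag L K * four_block_mat A B C D * Q = four_block_mat ?X1 ?X2 ?X3 ?X4" .
  have "block_diag L K + block_diag L K * four_block_mat A B C D * Q =
      four_block_mat (L + ?X1) ?X2 ?X3 (K + ?X4)"
    unfolding prod by (rule block_diag_add_four_block_mat[of _ nv nw _ nu ny]) (use c in auto)
  also have "\<dots> = Q" unfolding Q_def
  proof (rule cong_four_block_mat)
    have "L + ?X1 = L + L * A * QL" using c by (simp add: mat_ring_simps BQC)
    then show "L + ?X1 = QL" using e by simp
    have "?X2 = (L + L * A * QL) * B * QK" using c by (simp add: mat_ring_simps BQC)
    then show "?X2 = QL * B * QK" using e by simp
    have "?X3 = (K + K * D * QK) * C * QL" using c by (simp add: mat_ring_simps)
    then show "?X3 = QK * C * QL" using k by simp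
    have "K + ?X4 = (K + K * D * QK) + (K + K * D * QK) * C * QL * B * QK"
      using c by (simp add: mat_ring_simps)
    then show "K + ?X4 = QK + QK * C * QL * B * QK" using k by simp
  qed
  finally show ?thesis by simp
qed

lemma loop_map_block_diag_right:
  fixes A B C D L K QL QK :: "'a :: ring_1 mat"
  assumes c: "A \<in> carrier_mat nw nv" "B \<in> carrier_mat nw nu" "C \<in> carrier_mat ny nv"
    "D \<in> carrier_mat ny nu" "L \<in> carrier_mat nv nw" "K \<in> carrier_mat nu ny"
    "QL \<in> carrier_mat nv nw" "QK \<in> carrier_mat nu ny"
    and e: "QL = L + QL * A * L" and k: "QK = K + QK * D * K" and z: "B * QK * C = 0\<^sub>m nw nv"
  defines "Q \<equiv> four_block_mat QL (QL * B * QK) (QK * C * QL) (QK + QK * C * QL * B * QK)"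
  shows "Q = block_diag L K + Q * four_block_mat A B C D * block_diag L K"
proof -
  have BQC: "B * (QK * (C * X)) = 0\<^sub>m nw (dim_col X)" if "dim_row X = nv" for X
  proof -
    have "B * (QK * (C * X)) = B * QK * C * X" using c that by (simp add: mat_ring_simps)
    then show ?thesis using z that by simp
  qed
  have "Q * four_block_mat A B C D * block_diag L K = Q * (four_block_mat A B C D * block_diag L K)"
    unfolding Q_def using c by (subst mat_mult_assoc) (auto simp: block_diag_def)
  also have "\<dots> = Q * four_block_mat (A * L) (B * K) (C * L) (D * K)"
    using c by (simp add: four_block_mat_mult_block_diag)
  also have "\<dots> = four_block_mat (QL * (A * L) + QL * B * QK * (C * L))
      (QL * (B * K) + QL * B * QK * (D * K))
      (QK * C * QL * (A * L) + (QK + QK * C * QL * B * QK) * (C * L))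
      (QK * C * QL * (B * K) + (QK + QK * C * QL * B * QK) * (D * K))"
    (is "_ = four_block_mat ?X1 ?X2 ?X3 ?X4")
    unfolding Q_def using c by (subst mult_four_block_mat[of _ nv nw _ ny _ nu _ _ nw _ ny]) auto
  finally have prod: "Q * four_block_mat A B C D * block_diag L K = four_block_mat ?X1 ?X2 ?X3 ?X4" .
  have "block_diag L K + Q * four_block_mat A B C D * block_diag L K =
      four_block_mat (L + ?X1) ?X2 ?X3 (K + ?X4)"
    unfolding prod by (rule block_diag_add_four_block_mat[of _ nv nw _ nu ny]) (use c in auto)
  also have "\<dots> = Q" unfolding Q_def
  proof (rule cong_four_block_mat)
    have "L + ?X1 = L + QL * A * L" using c by (simp add: mat_ring_simps BQC)
    then show "L + ?X1 = QL" using e by simp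
    have "?X2 = QL * B * (K + QK * D * K)" using c by (simp add: mat_ring_simps)
    then show "?X2 = QL * B * QK" using k by simp
    have "?X3 = QK * C * (L + QL * A * L)" using c by (simp add: mat_ring_simps BQC)
    then show "?X3 = QK * C * QL" using e by simp
    have "K + ?X4 = (K + QK * D * K) + QK * C * QL * B * (K + QK * D * K)"
      using c by (simp add: mat_ring_simps)
    then show "K + ?X4 = QK + QK * C * QL * B * QK" using k by simp
  qed
  finally show ?thesis by simp
qed

lemma loop_map_controller_block:
  fixes A B C D K Q :: "'a :: ring_1 mat"
  assumes c: "A \<in> carrier_mat nw nv" "B \<in> carrier_mat nw nu" "C \<in> carrier_mat ny nv"
    "D \<in> carrier_mat ny nu" "K \<in> carrier_mat nu ny"
    and Q: "Q \<in> carrier_mat (nv + nu) (nw + ny)"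
    and loop: "loop_map (block_diag (0\<^sub>m nv nw) K) (four_block_mat A B C D) Q"
    and split: "split_block Q nv nw = (Q1, Q2, Q3, Q4)"
  shows "loop_map K D Q4"
proof -
  note blocks = split_block[OF split, of nu ny]
  have Q1: "Q1 \<in> carrier_mat nv nw" and Q2: "Q2 \<in> carrier_mat nv ny" and Q3: "Q3 \<in> carrier_mat nu nw"
    and Q4: "Q4 \<in> carrier_mat nu ny" and Q_eq: "Q = four_block_mat Q1 Q2 Q3 Q4"
    using blocks Q by auto
  note cc = c Q1 Q2 Q3 Q4
  let ?F = "block_diag (0\<^sub>m nv nw) K" and ?P = "four_block_mat A B C D"
  have FP: "?F * ?P = four_block_mat (0\<^sub>m nv nv) (0\<^sub>m nv nu) (K * C) (K * D)"
    using c by (subst block_diag_mult_four_block_mat[of _ nv nw _ nu ny _ nv _ nu]) auto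
  have "?F + ?F * ?P * Q = ?F + four_block_mat (0\<^sub>m nv nv * Q1 + 0\<^sub>m nv nu * Q3)
      (0\<^sub>m nv nv * Q2 + 0\<^sub>m nv nu * Q4) (K * C * Q1 + K * D * Q3) (K * C * Q2 + K * D * Q4)"
    unfolding FP Q_eq using cc by (subst mult_four_block_mat[of _ nv nv _ nu _ nu _ _ nw _ ny]) auto
  also have "\<dots> = four_block_mat (0\<^sub>m nv nw + (0\<^sub>m nv nv * Q1 + 0\<^sub>m nv nu * Q3))
      (0\<^sub>m nv nv * Q2 + 0\<^sub>m nv nu * Q4) (K * C * Q1 + K * D * Q3) (K + (K * C * Q2 + K * D * Q4))"
    by (rule block_diag_add_four_block_mat[of _ nv nw _ nu ny]) (use cc in auto)
  finally have "four_block_mat Q1 Q2 Q3 Q4 = \<dots>" using loop Q_eq unfolding loop_map_def by simp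
  from four_block_mat_inject[THEN iffD1, OF _ _ _ _ _ _ _ _ this, of nv nw ny nu] cc
  have q2: "Q2 = 0\<^sub>m nv ny" and q4: "Q4 = K + (K * C * Q2 + K * D * Q4)" by (auto simp: mat_ring_simps)
  have PF: "?P * ?F = four_block_mat (0\<^sub>m nw nw) (B * K) (0\<^sub>m ny nw) (D * K)"
    using c by (subst four_block_mat_mult_block_diag[of _ nv nw _ nu ny _ nw _ _ ny]) auto
  have "?F + Q * ?P * ?F = ?F + Q * (?P * ?F)"
    unfolding Q_eq block_diag_def using cc by (subst mat_mult_assoc) auto
  also have "\<dots> = ?F + Q * four_block_mat (0\<^sub>m nw nw) (B * K) (0\<^sub>m ny nw) (D * K)"
    unfolding PF ..
  also have "\<dots> = ?F + four_block_mat (Q1 * 0\<^sub>m nw nw + Q2 * 0\<^sub>m ny nw)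
      (Q1 * (B * K) + Q2 * (D * K)) (Q3 * 0\<^sub>m nw nw + Q4 * 0\<^sub>m ny nw) (Q3 * (B * K) + Q4 * (D * K))"
    unfolding Q_eq using cc by (subst mult_four_block_mat[of _ nv nw _ ny _ nu _ _ nw _ ny]) auto
  also have "\<dots> = four_block_mat (0\<^sub>m nv nw + (Q1 * 0\<^sub>m nw nw + Q2 * 0\<^sub>m ny nw))
      (Q1 * (B * K) + Q2 * (D * K)) (Q3 * 0\<^sub>m nw nw + Q4 * 0\<^sub>m ny nw) (K + (Q3 * (B * K) + Q4 * (D * K)))"
    by (rule block_diag_add_four_block_mat[of _ nv nw _ nu ny]) (use cc in auto)
  finally have "four_block_mat Q1 Q2 Q3 Q4 = \<dots>" using loop Q_eq unfolding loop_map_def by simp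
  from four_block_mat_inject[THEN iffD1, OF _ _ _ _ _ _ _ _ this, of nv nw ny nu] cc
  have q3: "Q3 = 0\<^sub>m nu nw" and q4': "Q4 = K + (Q3 * (B * K) + Q4 * (D * K))" by (auto simp: mat_ring_simps)
  have "Q4 = K + K * D * Q4" using q4 q2 cc by (simp add: mat_ring_simps)
  moreover have "Q4 = K + Q4 * D * K" using q4' q3 cc by (simp add: mat_ring_simps)
  ultimately show ?thesis unfolding loop_map_def ..
qed

text \<open>Closing the controller loop of the joint system leaves the interaction L facing the
  plant A + B QK C.\<close>

lemma interaction_block_eq:
  fixes A B C D L K Q QK :: "'a :: ring_1 mat"
  assumes c: "A \<in> carrier_mat nw nv" "B \<in> carrier_mat nw nu" "C \<in> carrier_mat ny nv"
    "D \<in> carrier_mat ny nu" "L \<in> carrier_mat nv nw" "K \<in> carrier_mat nu ny" "QK \<in> carrier_mat nu ny"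
    and Q: "Q \<in> carrier_mat (nv + nu) (nw + ny)"
    and e: "Q = block_diag L K + block_diag L K * four_block_mat A B C D * Q"
    and k: "QK = K + QK * D * K"
    and split: "split_block Q nv nw = (Q1, Q2, Q3, Q4)"
  shows "Q1 = L + L * (A + B * QK * C) * Q1"
proof -
  note blocks = split_block[OF split, of nu ny]
  have Q1: "Q1 \<in> carrier_mat nv nw" and Q2: "Q2 \<in> carrier_mat nv ny" and Q3: "Q3 \<in> carrier_mat nu nw"
    and Q4: "Q4 \<in> carrier_mat nu ny" and Q_eq: "Q = four_block_mat Q1 Q2 Q3 Q4"
    using blocks Q by auto
  note cc = c Q1 Q2 Q3 Q4
  have "block_diag L K + block_diag L K * four_block_mat A B C D * Q
     = block_diag L K + four_block_mat (L * A) (L * B) (K * C) (K * D) * Q"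
    using c by (simp add: block_diag_mult_four_block_mat)
  also have "\<dots> = block_diag L K + four_block_mat (L * A * Q1 + L * B * Q3) (L * A * Q2 + L * B * Q4)
      (K * C * Q1 + K * D * Q3) (K * C * Q2 + K * D * Q4)"
    unfolding Q_eq using cc by (subst mult_four_block_mat[of _ nv nv _ nu _ nu _ _ nw _ ny]) auto
  also have "\<dots> = four_block_mat (L + (L * A * Q1 + L * B * Q3)) (L * A * Q2 + L * B * Q4)
      (K * C * Q1 + K * D * Q3) (K + (K * C * Q2 + K * D * Q4))"
    by (rule block_diag_add_four_block_mat[of _ nv nw _ nu ny]) (use cc in auto)
  finally have "four_block_mat Q1 Q2 Q3 Q4 = \<dots>" using e Q_eq by simp
  from four_block_mat_inject[THEN iffD1, OF _ _ _ _ _ _ _ _ this, of nv nw ny nu] cc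
  have q1: "Q1 = L + (L * A * Q1 + L * B * Q3)" and q3: "Q3 = K * C * Q1 + K * D * Q3" by auto
  have h: "Q3 + - (K * D * Q3) = K * C * Q1" by (subst (1) q3) (use cc in \<open>simp add: mat_ring_simps\<close>)
  have z: "QK + - K + - (QK * D * K) = 0\<^sub>m nu ny" by (subst (1) k) (use cc in \<open>simp add: mat_ring_simps\<close>)
  have "Q3 = Q3 + (QK + - K + - (QK * D * K)) * D * Q3" using z cc by simp
  also have "\<dots> = (1\<^sub>m nu + QK * D) * (Q3 + - (K * D * Q3))" using cc by (simp add: mat_ring_simps)
  also have "\<dots> = (K + QK * D * K) * C * Q1" unfolding h using cc by (simp add: mat_ring_simps)
  also have "\<dots> = QK * C * Q1" using k by simp
  finally have "Q3 = QK * C * Q1" .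
  then show ?thesis by (subst (1) q1) (use cc in \<open>simp add: mat_ring_simps\<close>)
qed

section \<open>Destabilizing interactions\<close>

definition single_entry_mat :: "nat \<Rightarrow> nat \<Rightarrow> nat \<Rightarrow> nat \<Rightarrow> 'a :: zero \<Rightarrow> 'a mat" where
  "single_entry_mat n m j i x = mat n m (\<lambda>(a, b). if a = j \<and> b = i then x else 0)"

lemma single_entry_mat_carrier [simp]: "single_entry_mat n m j i x \<in> carrier_mat n m"
  unfolding single_entry_mat_def by auto

lemma dim_single_entry_mat [simp]:
  "dim_row (single_entry_mat n m j i x) = n" "dim_col (single_entry_mat n m j i x) = m"
  unfolding single_entry_mat_def by auto

lemma index_single_entry_mat [simp]:
  "a < n \<Longrightarrow> b < m \<Longrightarrow> single_entry_mat n m j i x $$ (a, b) = (if a = j \<and> b = i then x else 0)"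
  unfolding single_entry_mat_def by auto

lemma single_entry_mat_mult_index:
  fixes X :: "'a :: semiring_0 mat"
  assumes "i < m" "X \<in> carrier_mat m k" "r < n" "c < k"
  shows "(single_entry_mat n m j i x * X) $$ (r, c) = (if r = j then x * X $$ (i, c) else 0)"
proof -
  have "(single_entry_mat n m j i x * X) $$ (r, c) = (\<Sum>k \<in> {0..<m}. (if r = j \<and> k = i then x else 0) * X $$ (k, c))"
    using assms by (auto simp: scalar_prod_def)
  also have "\<dots> = (\<Sum>k \<in> {0..<m}. if k = i then (if r = j then x * X $$ (i, c) else 0) else 0)"
    by (rule sum.cong) auto
  finally show ?thesis using assms(1) by simp
qed

lemma mult_single_entry_mat_index:
  fixes X :: "'a :: semiring_0 mat"
  assumes "j < n" "X \<in> carrier_mat k n" "r < k" "c < m"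
  shows "(X * single_entry_mat n m j i x) $$ (r, c) = (if c = i then X $$ (r, j) * x else 0)"
proof -
  have "(X * single_entry_mat n m j i x) $$ (r, c) = (\<Sum>k \<in> {0..<n}. X $$ (r, k) * (if k = j \<and> c = i then x else 0))"
    using assms by (auto simp: scalar_prod_def)
  also have "\<dots> = (\<Sum>k \<in> {0..<n}. if k = j then (if c = i then X $$ (r, j) * x else 0) else 0)"
    by (rule sum.cong) auto
  finally show ?thesis using assms(1) by simp
qed

lemma single_entry_mat_sandwich_index:
  fixes A :: "'a :: comm_semiring_0 mat"
  assumes A: "A \<in> carrier_mat nw nv" and ij: "i < nw" "j < nv" and ab: "a < nv" "b < nw"
  shows "(single_entry_mat nv nw j i x * A * single_entry_mat nv nw j i y) $$ (a, b) =
    (if a = j \<and> b = i then x * A $$ (i, j) * y else 0)"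
proof -
  let ?Z = "single_entry_mat nv nw j i y"
  have "single_entry_mat nv nw j i x * A * ?Z = single_entry_mat nv nw j i x * (A * ?Z)"
    using A by (subst mat_mult_assoc) auto
  moreover have "(single_entry_mat nv nw j i x * (A * ?Z)) $$ (a, b) = (if a = j then x * (A * ?Z) $$ (i, b) else 0)"
    by (rule single_entry_mat_mult_index) (use A ij ab in auto)
  moreover have "(A * ?Z) $$ (i, b) = (if b = i then A $$ (i, j) * y else 0)"
    by (rule mult_single_entry_mat_index) (use A ij ab in auto)
  ultimately show ?thesis by (cases "a = j"; cases "b = i") (simp_all add: mult.assoc)
qed

lemma loop_map_single_entry_mat:
  fixes A :: "'a :: comm_ring_1 mat"
  assumes A: "A \<in> carrier_mat nw nv" and ij: "i < nw" "j < nv"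
    and gain: "l * (1 + r * A $$ (i, j)) = r"
  shows "loop_map (single_entry_mat nv nw j i l) A (single_entry_mat nv nw j i r)"
proof -
  have "single_entry_mat nv nw j i r = single_entry_mat nv nw j i l + single_entry_mat nv nw j i l * A * single_entry_mat nv nw j i r"
    "single_entry_mat nv nw j i r = single_entry_mat nv nw j i l + single_entry_mat nv nw j i r * A * single_entry_mat nv nw j i l"
    using gain A ij by (auto intro!: eq_matI simp: single_entry_mat_sandwich_index algebra_simps simp del: index_mult_mat(1))
  then show ?thesis unfolding loop_map_def by blast
qed

lemma single_entry_loop_index:
  fixes G V :: "'a :: comm_ring_1 mat"
  assumes G: "G \<in> carrier_mat nw nv" and V: "V \<in> carrier_mat nv nw" and ij: "i < nw" "j < nv"
    and loop: "V = single_entry_mat nv nw j i l + single_entry_mat nv nw j i l * G * V"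
  shows "V $$ (j, i) = l + l * (G $$ (i, j) * V $$ (j, i))"
proof -
  have entry: "V $$ (k, i) = (if k = j then l else 0) + (if k = j then l * (G * V) $$ (i, i) else 0)"
    if "k < nv" for k
  proof -
    have "single_entry_mat nv nw j i l * G * V = single_entry_mat nv nw j i l * (G * V)"
      using G V by (subst mat_mult_assoc) auto
    moreover have "(single_entry_mat nv nw j i l * (G * V)) $$ (k, i) = (if k = j then l * (G * V) $$ (i, i) else 0)"
      by (rule single_entry_mat_mult_index) (use G V ij that in auto)
    ultimately show ?thesis
      using arg_cong[OF loop, of "\<lambda>X. X $$ (k, i)"] that ij G V by simp
  qed
  have "(G * V) $$ (i, i) = (\<Sum>k \<in> {0..<nv}. G $$ (i, k) * V $$ (k, i))"
    using G V ij by (simp add: scalar_prod_def)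
  also have "\<dots> = (\<Sum>k \<in> {0..<nv}. if k = j then G $$ (i, j) * V $$ (j, i) else 0)"
    by (rule sum.cong) (auto simp: entry)
  finally have "(G * V) $$ (i, i) = G $$ (i, j) * V $$ (j, i)" using ij by simp
  then show ?thesis using entry[OF ij(2)] by simp
qed

lemma stable_tf_imp_proper_tf: "stable_tf a \<Longrightarrow> proper_tf a"
  unfolding stable_tf_def proper_tf_def by blast

lemma exists_pos_not_root: "(p :: real poly) \<noteq> 0 \<Longrightarrow> \<exists>x>0. poly p x \<noteq> 0"
  using poly_roots_finite[of p] infinite_Ioi[of "0 :: real"]
  by (metis (mono_tags, lifting) finite_subset greaterThan_iff mem_Collect_eq subsetI)

lemma proper_loop_gain:
  assumes "proper_tf a"
  shows "\<exists>l. proper_tf l \<and> l * (1 + Fract [:c:] [:1, 1:] * a) = Fract [:c:] [:1, 1:]"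
proof -
  from assms obtain p q where pq: "q \<noteq> 0" "a = Fract p q" "degree p \<le> degree q"
    unfolding proper_tf_def by blast
  define den where "den = [:1, 1:] * q + [:c:] * p"
  have sq: "[:1, 1:] * q \<noteq> 0" by (rule no_zero_divisors) (simp_all add: pq)
  have "degree ([:c:] * p) \<le> degree q" using degree_mult_le[of "[:c:]" p] pq by simp
  moreover have "degree ([:1, 1:] * q) = Suc (degree q)" using pq by (subst degree_mult_eq) auto
  ultimately have deg: "degree den = Suc (degree q)" unfolding den_def by (subst degree_add_eq_left) auto
  then have den: "den \<noteq> 0" by auto
  have proper: "proper_tf (Fract ([:c:] * q) den)"
    unfolding proper_tf_def using den deg degree_mult_le[of "[:c:]" q]
    by (intro exI[of _ "[:c:] * q"] exI[of _ den]) auto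
  have "1 + Fract [:c:] [:1, 1:] * a = Fract den ([:1, 1:] * q)"
    unfolding den_def pq(2) using sq by (simp add: One_fract_def add_fract)
  moreover have "Fract ([:c:] * q) den * Fract den ([:1, 1:] * q) = Fract [:c:] [:1, 1:]"
  proof -
    have "den * ([:1, 1:] * q) \<noteq> 0" using den sq by simp
    then have "Fract ([:c:] * q * den) (den * ([:1, 1:] * q)) = Fract [:c:] [:1, 1:] \<longleftrightarrow>
        [:c:] * q * den * [:1, 1:] = [:c:] * (den * ([:1, 1:] * q))"
      by (rule eq_fract(1)) simp
    moreover have "[:c:] * q * den * [:1, 1:] = [:c:] * (den * ([:1, 1:] * q))" by (simp only: ac_simps)
    ultimately show ?thesis by (simp only: mult_fract)
  qed
  ultimately have "Fract ([:c:] * q) den * (1 + Fract [:c:] [:1, 1:] * a) = Fract [:c:] [:1, 1:]"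
    by simp
  with proper show ?thesis by blast
qed

text \<open>With r = c / (s + 1) and \<delta> = a / b, the choice of c makes 1 - r \<delta> vanish at s0 > 0,
  where r does not vanish and the stable v has no pole.\<close>

lemma no_stable_scalar_loop:
  assumes v: "stable_tf v" and b: "b \<noteq> 0" and s0: "s0 > 0" "poly b s0 \<noteq> 0" "poly a s0 \<noteq> 0"
  defines "c \<equiv> (s0 + 1) * poly b s0 / poly a s0"
  shows "v * (1 - Fract [:c:] [:1, 1:] * Fract a b) \<noteq> Fract [:c:] [:1, 1:]"
proof
  assume eq: "v * (1 - Fract [:c:] [:1, 1:] * Fract a b) = Fract [:c:] [:1, 1:]"
  from v obtain p q where v_eq: "v = Fract p q" and "hurwitz q"
    unfolding stable_tf_iff_hurwitz by blast
  then have q: "q \<noteq> 0" "poly q s0 \<noteq> 0" using s0 by (simp_all add: hurwitz_neq_0 hurwitz_poly_neq_0)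
  define N where "N = [:1, 1:] * b - [:c:] * a"
  have sb: "[:1, 1:] * b \<noteq> 0" by (rule no_zero_divisors) (simp_all add: b)
  have "1 - Fract [:c:] [:1, 1:] * Fract a b = Fract N ([:1, 1:] * b)"
    unfolding N_def using sb by (simp add: One_fract_def diff_fract)
  then have "Fract (p * N) (q * ([:1, 1:] * b)) = Fract [:c:] [:1, 1:]"
    using eq v_eq by simp
  then have "p * N * [:1, 1:] = [:c:] * (q * ([:1, 1:] * b))"
    using q sb by (simp add: eq_fract)
  then have "poly (p * N * [:1, 1:]) s0 = poly ([:c:] * (q * ([:1, 1:] * b))) s0" by simp
  moreover have "poly N s0 = 0" unfolding N_def c_def using s0 by (simp add: field_simps)
  ultimately have "c * (poly q s0 * ((1 + s0) * poly b s0)) = 0" by (simp add: algebra_simps)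
  moreover have "c \<noteq> 0" unfolding c_def using s0 by simp
  ultimately show False using q s0 by simp
qed

text \<open>A nonzero entry \<delta> of \<Delta> is detected by a single proper gain l from output i to input j:
  against A it closes a loop with the stable closed-loop map r = c / (s + 1), but against
  A + \<Delta> the same loop would need a stable v with v (1 - r \<delta>) = r.\<close>

lemma perturbation_eq_0_if_stabilization_persists:
  assumes A: "A \<in> carrier_mat nw nv" "RH_inf A" and \<Delta>: "\<Delta> \<in> carrier_mat nw nv" "RH_inf \<Delta>"
    and persists: "\<And>L. L \<in> carrier_mat nv nw \<Longrightarrow> proper_mat L \<Longrightarrow> fb_stable A L \<Longrightarrow>
      \<exists>V \<in> carrier_mat nv nw. RH_inf V \<and> V = L + L * (A + \<Delta>) * V"
  shows "\<Delta> = 0\<^sub>m nw nv"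
proof (rule ccontr)
  assume "\<Delta> \<noteq> 0\<^sub>m nw nv"
  then obtain i j where ij: "i < nw" "j < nv" and "\<Delta> $$ (i, j) \<noteq> 0"
    using \<Delta>(1) by (auto simp: mat_eq_iff)
  have "stable_tf (\<Delta> $$ (i, j))" using RH_infD[OF \<Delta>(2)] ij \<Delta>(1) by auto
  then obtain a b where \<delta>: "\<Delta> $$ (i, j) = Fract a b" and "hurwitz b"
    unfolding stable_tf_iff_hurwitz by blast
  then have b: "b \<noteq> 0" by (simp add: hurwitz_neq_0)
  with \<delta> \<open>\<Delta> $$ (i, j) \<noteq> 0\<close> have "a \<noteq> 0" by (auto simp: eq_fract Zero_fract_def)
  then obtain s0 where s0: "s0 > 0" "poly a s0 \<noteq> 0" using exists_pos_not_root by blast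
  have "poly b s0 \<noteq> 0" using \<open>hurwitz b\<close> s0 by (simp add: hurwitz_poly_neq_0)
  define r where "r = Fract [:(s0 + 1) * poly b s0 / poly a s0:] [:1, 1:]"
  define a0 where "a0 = A $$ (i, j)"
  have "stable_tf a0" unfolding a0_def using RH_infD[OF A(2)] ij A(1) by auto
  then obtain l where l: "proper_tf l" "l * (1 + r * a0) = r"
    unfolding r_def using proper_loop_gain stable_tf_imp_proper_tf by blast
  define L where "L = single_entry_mat nv nw j i l"
  have L: "L \<in> carrier_mat nv nw" "proper_mat L"
    unfolding L_def proper_mat_def using l(1) by auto
  have "loop_map L A (single_entry_mat nv nw j i r)"
    unfolding L_def a0_def by (rule loop_map_single_entry_mat[OF A(1) ij l(2)[unfolded a0_def]])
  moreover have "RH_inf (single_entry_mat nv nw j i r)"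
    unfolding r_def by (intro RH_infI) (simp add: stable_tf_const_over_s_plus_1)
  ultimately have "fb_stable A L"
    using fb_stable_iff_loop_map[OF L(1) A] by auto
  then obtain V where V: "V \<in> carrier_mat nv nw" "RH_inf V" "V = L + L * (A + \<Delta>) * V"
    using persists L by blast
  define v where "v = V $$ (j, i)"
  have "stable_tf v" unfolding v_def using RH_infD[OF V(2)] ij V(1) by auto
  have v_loop: "v = l + l * ((a0 + Fract a b) * v)"
    using single_entry_loop_index[of "A + \<Delta>", OF _ V(1) ij V(3)[unfolded L_def]] A(1) \<Delta>(1) ij
    unfolding v_def a0_def \<delta>[symmetric] by simp
  have "v * (1 + r * a0) = l * (1 + r * a0) + l * (1 + r * a0) * ((a0 + Fract a b) * v)"
    by (subst v_loop) (simp add: algebra_simps)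
  also have "\<dots> = r + r * ((a0 + Fract a b) * v)" using l(2) by simp
  finally have "v * (1 - r * Fract a b) = r" by (simp add: algebra_simps)
  with no_stable_scalar_loop[OF \<open>stable_tf v\<close> b s0(1) \<open>poly b s0 \<noteq> 0\<close> s0(2)]
  show False unfolding r_def by blast
qed

section \<open>Retrofit controllers\<close>

locale stable_plant =
  fixes nw nz ny nv nd nu :: nat and Pwv Pwd Pwu Pzv Pzd Pzu Pyv Pyd Pyu :: "tf mat"
  assumes carrier: "Pwv \<in> carrier_mat nw nv" "Pwd \<in> carrier_mat nw nd" "Pwu \<in> carrier_mat nw nu"
    "Pzv \<in> carrier_mat nz nv" "Pzd \<in> carrier_mat nz nd" "Pzu \<in> carrier_mat nz nu"
    "Pyv \<in> carrier_mat ny nv" "Pyd \<in> carrier_mat ny nd" "Pyu \<in> carrier_mat ny nu"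
  and stable: "RH_inf Pwv" "RH_inf Pwd" "RH_inf Pwu" "RH_inf Pzv" "RH_inf Pzd" "RH_inf Pzu"
    "RH_inf Pyv" "RH_inf Pyd" "RH_inf Pyu"
begin

abbreviation loop_stable :: "tf mat \<Rightarrow> tf mat \<Rightarrow> bool" where
  "loop_stable L K \<equiv> plant_loop_stable Pwv Pwd Pwu Pzv Pzd Pzu Pyv Pyd Pyu L K"

abbreviation P :: "tf mat" where
  "P \<equiv> four_block_mat Pwv Pwu Pyv Pyu"

lemma loop_stable_iff_loop_map:
  assumes L: "L \<in> carrier_mat nv nw" and K: "K \<in> carrier_mat nu ny"
  shows "loop_stable L K \<longleftrightarrow> (\<exists>Q \<in> carrier_mat (nv + nu) (nw + ny). RH_inf Q \<and> loop_map (block_diag L K) P Q)"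
proof -
  have "loop_stable L K \<longleftrightarrow> fb_stable P (block_diag L K)"
    unfolding plant_loop_stable_def block_diag_def[symmetric]
    by (rule int_stable_iff_fb_stable) (use carrier stable in \<open>auto intro!: RH_inf_append_rows
        RH_inf_append_cols_mat simp: RH_inf_four_block_mat append_cols_mat_def append_rows_def\<close>)
  also have "\<dots> \<longleftrightarrow> (\<exists>Q \<in> carrier_mat (nv + nu) (nw + ny). RH_inf Q \<and> loop_map (block_diag L K) P Q)"
    by (rule fb_stable_iff_loop_map) (use L K carrier stable in \<open>auto simp: RH_inf_four_block_mat\<close>)
  finally show ?thesis .
qed

lemma loop_stable_if_loop_map:
  assumes L: "L \<in> carrier_mat nv nw" and K: "K \<in> carrier_mat nu ny" and "fb_stable Pwv L"
    and QK: "QK \<in> carrier_mat nu ny" "RH_inf QK" "loop_map K Pyu QK"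
    and decoupled: "Pwu * QK * Pyv = 0\<^sub>m nw nv"
  shows "loop_stable L K"
proof -
  obtain QL where QL: "QL \<in> carrier_mat nv nw" "RH_inf QL" "loop_map L Pwv QL"
    using \<open>fb_stable Pwv L\<close> fb_stable_iff_loop_map[OF L carrier(1) stable(1)] by blast
  txt \<open>The joint closed-loop map, assembled from those of the interaction loop and of the
    controller loop.\<close>
  define Q where "Q = four_block_mat QL (QL * Pwu * QK) (QK * Pyv * QL) (QK + QK * Pyv * QL * Pwu * QK)"
  have "loop_map (block_diag L K) P Q"
    using loop_map_block_diag_left[OF carrier(1,3,7,9) L K QL(1) QK(1) _ _ decoupled]
      loop_map_block_diag_right[OF carrier(1,3,7,9) L K QL(1) QK(1) _ _ decoupled]
      QL(3) QK(3) unfolding loop_map_def Q_def by blast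
  moreover have "Q \<in> carrier_mat (nv + nu) (nw + ny)" unfolding Q_def using carrier QL QK by auto
  moreover have "RH_inf Q" unfolding Q_def using carrier QL QK stable
    by (subst RH_inf_four_block_mat) (auto intro!: RH_inf_add RH_inf_mult)
  ultimately show ?thesis using loop_stable_iff_loop_map[OF L K] by blast
qed

lemma loop_map_if_loop_stable_for_all:
  assumes K: "K \<in> carrier_mat nu ny"
    and all: "\<And>L. L \<in> carrier_mat nv nw \<Longrightarrow> proper_mat L \<Longrightarrow> fb_stable Pwv L \<Longrightarrow> loop_stable L K"
  shows "\<exists>QK \<in> carrier_mat nu ny. RH_inf QK \<and> loop_map K Pyu QK \<and> Pwu * QK * Pyv = 0\<^sub>m nw nv"
proof -
  txt \<open>The zero interaction is stabilizing; the joint loop with it yields the loop map QK of K.\<close>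
  have "fb_stable Pwv (0\<^sub>m nv nw)"
    using fb_stable_iff_loop_map[OF _ carrier(1) stable(1)] carrier(1)
    unfolding loop_map_def by fastforce
  moreover have "proper_mat (0\<^sub>m nv nw)" unfolding proper_mat_def by simp
  ultimately obtain Q where Q: "Q \<in> carrier_mat (nv + nu) (nw + ny)" "RH_inf Q"
    "loop_map (block_diag (0\<^sub>m nv nw) K) P Q"
    using all loop_stable_iff_loop_map[OF _ K, of "0\<^sub>m nv nw"] by auto
  obtain Q1 Q2 Q3 QK where split: "split_block Q nv nw = (Q1, Q2, Q3, QK)" by (metis prod_cases4)
  have QK: "QK \<in> carrier_mat nu ny" "RH_inf QK"
    using split_block[OF split, of nu ny] Q by (auto simp: RH_inf_four_block_mat)
  have loop: "loop_map K Pyu QK"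
    by (rule loop_map_controller_block[OF carrier(1,3,7,9) K Q(1,3) split])
  have "Pwu * QK * Pyv = 0\<^sub>m nw nv"
  proof (rule perturbation_eq_0_if_stabilization_persists[OF carrier(1) stable(1)])
    show "Pwu * QK * Pyv \<in> carrier_mat nw nv" "RH_inf (Pwu * QK * Pyv)"
      using carrier stable QK by (auto intro!: RH_inf_mult)
    fix L assume L: "L \<in> carrier_mat nv nw" "proper_mat L" "fb_stable Pwv L"
    then obtain Q' where Q': "Q' \<in> carrier_mat (nv + nu) (nw + ny)" "RH_inf Q'"
      "loop_map (block_diag L K) P Q'"
      using all loop_stable_iff_loop_map[OF L(1) K] by blast
    obtain V Q2' Q3' Q4' where split': "split_block Q' nv nw = (V, Q2', Q3', Q4')" by (metis prod_cases4)
    have "V \<in> carrier_mat nv nw" "RH_inf V"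
      using split_block[OF split', of nu ny] Q' by (auto simp: RH_inf_four_block_mat)
    moreover have "V = L + L * (Pwv + Pwu * QK * Pyv) * V"
      using interaction_block_eq[OF carrier(1,3,7,9) L(1) K QK(1) Q'(1) _ _ split'] Q'(3) loop
      unfolding loop_map_def by blast
    ultimately show "\<exists>V \<in> carrier_mat nv nw. RH_inf V \<and> V = L + L * (Pwv + Pwu * QK * Pyv) * V"
      by blast
  qed
  with QK loop show ?thesis by blast
qed

lemma loop_stable_for_all_iff:
  assumes "K \<in> carrier_mat nu ny"
  shows "(\<forall>L. L \<in> carrier_mat nv nw \<and> proper_mat L \<and> fb_stable Pwv L \<longrightarrow> loop_stable L K) \<longleftrightarrow>
    (\<exists>QK \<in> carrier_mat nu ny. RH_inf QK \<and> loop_map K Pyu QK \<and> Pwu * QK * Pyv = 0\<^sub>m nw nv)"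
  using loop_map_if_loop_stable_for_all[OF assms] loop_stable_if_loop_map[OF _ assms] by blast

end

section \<open>Networks\<close>

lemma diag_mats_Suc [simp]: "diag_mats (Suc n) f = block_diag (diag_mats n f) (f n)"
  by (simp add: block_diag_def Let_def)

declare diag_mats.simps(2) [simp del]

lemma diag_mats_carrier:
  "(\<And>i. i < N \<Longrightarrow> f i \<in> carrier_mat (r i) (c i)) \<Longrightarrow> diag_mats N f \<in> carrier_mat (\<Sum>i<N. r i) (\<Sum>i<N. c i)"
  by (induction N) auto

lemma RH_inf_diag_mats: "(\<And>i. i < N \<Longrightarrow> RH_inf (f i)) \<Longrightarrow> RH_inf (diag_mats N f)"
  by (induction N) (auto simp: RH_inf_block_diag)

lemma diag_mats_cong: "(\<And>i. i < N \<Longrightarrow> f i = g i) \<Longrightarrow> diag_mats N f = diag_mats N g"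
  by (induction N) auto

lemma diag_mats_zero: "diag_mats N (\<lambda>i. 0\<^sub>m (r i) (c i)) = 0\<^sub>m (\<Sum>i<N. r i) (\<Sum>i<N. c i)"
  by (induction N) (auto simp: block_diag_def)

lemma diag_mats_mult:
  assumes "\<And>i. i < N \<Longrightarrow> f i \<in> carrier_mat (a i) (b i)" "\<And>i. i < N \<Longrightarrow> g i \<in> carrier_mat (b i) (c i)"
  shows "diag_mats N f * diag_mats N g = diag_mats N (\<lambda>i. f i * g i)"
  using assms
proof (induction N)
  case (Suc n)
  have "diag_mats n f \<in> carrier_mat (\<Sum>i<n. a i) (\<Sum>i<n. b i)" "diag_mats n g \<in> carrier_mat (\<Sum>i<n. b i) (\<Sum>i<n. c i)"
    using Suc.prems by (auto intro!: diag_mats_carrier)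
  with Suc show ?case unfolding diag_mats_Suc
    by (subst block_diag_mult[of _ _ "\<Sum>i<n. b i" _ _ _ _ "b n"]) auto
qed simp

lemma diag_mats_add:
  assumes "\<And>i. i < N \<Longrightarrow> f i \<in> carrier_mat (a i) (b i)" "\<And>i. i < N \<Longrightarrow> g i \<in> carrier_mat (a i) (b i)"
  shows "diag_mats N f + diag_mats N g = diag_mats N (\<lambda>i. f i + g i)"
  using assms
proof (induction N)
  case (Suc n)
  have "diag_mats n f \<in> carrier_mat (\<Sum>i<n. a i) (\<Sum>i<n. b i)" "diag_mats n g \<in> carrier_mat (\<Sum>i<n. a i) (\<Sum>i<n. b i)"
    using Suc.prems by (auto intro!: diag_mats_carrier)
  with Suc show ?case unfolding diag_mats_Suc
    by (subst block_diag_add[of _ "\<Sum>i<n. a i" "\<Sum>i<n. b i" _ _ "a n" "b n"]) auto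
qed simp

lemma loop_map_diag_mats:
  assumes K: "\<And>i. i < N \<Longrightarrow> K i \<in> carrier_mat (nu i) (ny i)"
    and D: "\<And>i. i < N \<Longrightarrow> D i \<in> carrier_mat (ny i) (nu i)"
    and Q: "\<And>i. i < N \<Longrightarrow> Q i \<in> carrier_mat (nu i) (ny i)"
    and loop: "\<And>i. i < N \<Longrightarrow> loop_map (K i) (D i) (Q i)"
  shows "loop_map (diag_mats N K) (diag_mats N D) (diag_mats N Q)"
proof -
  have KD: "\<And>i. i < N \<Longrightarrow> K i * D i \<in> carrier_mat (nu i) (nu i)"
    and QD: "\<And>i. i < N \<Longrightarrow> Q i * D i \<in> carrier_mat (nu i) (nu i)"
    and KDQ: "\<And>i. i < N \<Longrightarrow> K i * D i * Q i \<in> carrier_mat (nu i) (ny i)"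
    and QDK: "\<And>i. i < N \<Longrightarrow> Q i * D i * K i \<in> carrier_mat (nu i) (ny i)"
    using K D Q by (metis mult_carrier_mat)+
  have "diag_mats N K + diag_mats N K * diag_mats N D * diag_mats N Q =
      diag_mats N (\<lambda>i. K i + K i * D i * Q i)"
    using K D Q KD KDQ by (simp add: diag_mats_mult[of N _ nu ny _ nu] diag_mats_mult[of N _ nu nu _ ny]
        diag_mats_add[of N _ nu ny])
  also have "\<dots> = diag_mats N Q" using loop by (intro diag_mats_cong) (simp add: loop_map_def)
  finally have left: "diag_mats N Q = diag_mats N K + diag_mats N K * diag_mats N D * diag_mats N Q" ..
  have "diag_mats N K + diag_mats N Q * diag_mats N D * diag_mats N K =
      diag_mats N (\<lambda>i. K i + Q i * D i * K i)"
    using K D Q QD QDK by (simp add: diag_mats_mult[of N _ nu ny _ nu] diag_mats_mult[of N _ nu nu _ ny]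
        diag_mats_add[of N _ nu ny])
  also have "\<dots> = diag_mats N Q" using loop by (intro diag_mats_cong) (simp add: loop_map_def)
  finally show ?thesis using left unfolding loop_map_def by simp
qed

lemma loop_map_block_diag_split:
  fixes K1 D1 K2 D2 Q :: "'a :: ring_1 mat"
  assumes c: "K1 \<in> carrier_mat a1 b1" "D1 \<in> carrier_mat b1 a1" "K2 \<in> carrier_mat a2 b2" "D2 \<in> carrier_mat b2 a2"
    and Q: "Q \<in> carrier_mat (a1 + a2) (b1 + b2)"
    and loop: "loop_map (block_diag K1 K2) (block_diag D1 D2) Q"
    and split: "split_block Q a1 b1 = (Q1, Q2, Q3, Q4)"
  shows "loop_map K1 D1 Q1 \<and> loop_map K2 D2 Q4"
proof -
  note blocks = split_block[OF split, of a2 b2]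
  have Q1: "Q1 \<in> carrier_mat a1 b1" and Q2: "Q2 \<in> carrier_mat a1 b2" and Q3: "Q3 \<in> carrier_mat a2 b1"
    and Q4: "Q4 \<in> carrier_mat a2 b2" and Q_eq: "Q = four_block_mat Q1 Q2 Q3 Q4" using blocks Q by auto
  note cc = c Q1 Q2 Q3 Q4
  have KD: "block_diag K1 K2 * block_diag D1 D2 = block_diag (K1 * D1) (K2 * D2)"
    and DK: "block_diag D1 D2 * block_diag K1 K2 = block_diag (D1 * K1) (D2 * K2)"
    using c by (auto intro!: block_diag_mult)
  have "block_diag K1 K2 + block_diag K1 K2 * block_diag D1 D2 * Q =
      block_diag K1 K2 + four_block_mat (K1 * D1 * Q1) (K1 * D1 * Q2) (K2 * D2 * Q3) (K2 * D2 * Q4)"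
    unfolding KD Q_eq using cc by (subst block_diag_mult_four_block_mat[of _ a1 a1 _ a2 a2]) auto
  also have "\<dots> = four_block_mat (K1 + K1 * D1 * Q1) (K1 * D1 * Q2) (K2 * D2 * Q3) (K2 + K2 * D2 * Q4)"
    using cc by (subst block_diag_add_four_block_mat[of _ a1 b1 _ a2 b2]) auto
  finally have "four_block_mat Q1 Q2 Q3 Q4 = \<dots>" using loop Q_eq unfolding loop_map_def by simp
  from four_block_mat_inject[THEN iffD1, OF _ _ _ _ _ _ _ _ this, of a1 b1 b2 a2] cc
  have left: "Q1 = K1 + K1 * D1 * Q1" "Q4 = K2 + K2 * D2 * Q4" by auto
  have "Q * block_diag D1 D2 * block_diag K1 K2 = Q * block_diag (D1 * K1) (D2 * K2)"
    unfolding DK[symmetric] using cc Q by (subst mat_mult_assoc) (auto simp: block_diag_def)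
  also have "\<dots> = four_block_mat (Q1 * (D1 * K1)) (Q2 * (D2 * K2)) (Q3 * (D1 * K1)) (Q4 * (D2 * K2))"
    unfolding Q_eq using cc by (subst four_block_mat_mult_block_diag[of _ b1 b1 _ b2 b2 _ a1 _ _ a2]) auto
  finally have "block_diag K1 K2 + Q * block_diag D1 D2 * block_diag K1 K2 = block_diag K1 K2 + \<dots>"
    by simp
  also have "\<dots> = four_block_mat (K1 + Q1 * (D1 * K1)) (Q2 * (D2 * K2)) (Q3 * (D1 * K1)) (K2 + Q4 * (D2 * K2))"
    using cc by (subst block_diag_add_four_block_mat[of _ a1 b1 _ a2 b2]) auto
  finally have "four_block_mat Q1 Q2 Q3 Q4 = \<dots>" using loop Q_eq unfolding loop_map_def by simp
  from four_block_mat_inject[THEN iffD1, OF _ _ _ _ _ _ _ _ this, of a1 b1 b2 a2] cc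
  have right: "Q1 = K1 + Q1 * D1 * K1" "Q4 = K2 + Q4 * D2 * K2" by (auto simp: mat_ring_simps)
  from left right show ?thesis unfolding loop_map_def by blast
qed

lemma block_diag_sandwich_eq_0_split:
  fixes B1 B2 C1 C2 Q :: "'a :: semiring_0 mat"
  assumes c: "B1 \<in> carrier_mat w1 a1" "C1 \<in> carrier_mat b1 v1" "B2 \<in> carrier_mat w2 a2" "C2 \<in> carrier_mat b2 v2"
    and Q: "Q \<in> carrier_mat (a1 + a2) (b1 + b2)"
    and z: "block_diag B1 B2 * Q * block_diag C1 C2 = 0\<^sub>m (w1 + w2) (v1 + v2)"
    and split: "split_block Q a1 b1 = (Q1, Q2, Q3, Q4)"
  shows "B1 * Q1 * C1 = 0\<^sub>m w1 v1 \<and> B2 * Q4 * C2 = 0\<^sub>m w2 v2"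
proof -
  note blocks = split_block[OF split, of a2 b2]
  have Q1: "Q1 \<in> carrier_mat a1 b1" and Q2: "Q2 \<in> carrier_mat a1 b2" and Q3: "Q3 \<in> carrier_mat a2 b1"
    and Q4: "Q4 \<in> carrier_mat a2 b2" and Q_eq: "Q = four_block_mat Q1 Q2 Q3 Q4" using blocks Q by auto
  note cc = c Q1 Q2 Q3 Q4
  have "block_diag B1 B2 * Q * block_diag C1 C2 = block_diag B1 B2 * (Q * block_diag C1 C2)"
    using cc Q by (subst mat_mult_assoc) (auto simp: block_diag_def)
  also have "\<dots> = block_diag B1 B2 * four_block_mat (Q1 * C1) (Q2 * C2) (Q3 * C1) (Q4 * C2)"
    unfolding Q_eq using cc by (subst four_block_mat_mult_block_diag[of _ b1 v1 _ b2 v2 _ a1 _ _ a2]) auto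
  also have "\<dots> = four_block_mat (B1 * (Q1 * C1)) (B1 * (Q2 * C2)) (B2 * (Q3 * C1)) (B2 * (Q4 * C2))"
    using cc by (subst block_diag_mult_four_block_mat[of _ w1 a1 _ w2 a2 _ v1 _ v2]) auto
  finally have "four_block_mat (B1 * (Q1 * C1)) (B1 * (Q2 * C2)) (B2 * (Q3 * C1)) (B2 * (Q4 * C2))
     = four_block_mat (0\<^sub>m w1 v1) (0\<^sub>m w1 v2) (0\<^sub>m w2 v1) (0\<^sub>m w2 v2)" using z by simp
  from four_block_mat_inject[THEN iffD1, OF _ _ _ _ _ _ _ _ this, of w1 v1 v2 w2] cc
  show ?thesis by (auto simp: mat_ring_simps)
qed

definition retrofit_param :: "tf mat \<Rightarrow> tf mat \<Rightarrow> tf mat \<Rightarrow> tf mat \<Rightarrow> tf mat \<Rightarrow> bool" where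
  "retrofit_param K D B C Q \<longleftrightarrow> RH_inf Q \<and> loop_map K D Q \<and> B * Q * C = 0\<^sub>m (dim_row B) (dim_col C)"

lemma retrofit_param_block_diag_split:
  assumes c: "K1 \<in> carrier_mat a1 b1" "D1 \<in> carrier_mat b1 a1" "B1 \<in> carrier_mat w1 a1" "C1 \<in> carrier_mat b1 v1"
    "K2 \<in> carrier_mat a2 b2" "D2 \<in> carrier_mat b2 a2" "B2 \<in> carrier_mat w2 a2" "C2 \<in> carrier_mat b2 v2"
    and Q: "Q \<in> carrier_mat (a1 + a2) (b1 + b2)"
    and param: "retrofit_param (block_diag K1 K2) (block_diag D1 D2) (block_diag B1 B2) (block_diag C1 C2) Q"
  shows "\<exists>Q1 \<in> carrier_mat a1 b1. retrofit_param K1 D1 B1 C1 Q1"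
    and "\<exists>Q4 \<in> carrier_mat a2 b2. retrofit_param K2 D2 B2 C2 Q4"
proof -
  obtain Q1 Q2 Q3 Q4 where split: "split_block Q a1 b1 = (Q1, Q2, Q3, Q4)" by (metis prod_cases4)
  have dims: "dim_row (block_diag B1 B2) = w1 + w2" "dim_col (block_diag C1 C2) = v1 + v2"
    "dim_row B1 = w1" "dim_row B2 = w2" "dim_col C1 = v1" "dim_col C2 = v2"
    using c[THEN carrier_matD(1)] c[THEN carrier_matD(2)] by (auto simp: block_diag_def)
  have "RH_inf Q" and loop: "loop_map (block_diag K1 K2) (block_diag D1 D2) Q"
    and z: "block_diag B1 B2 * Q * block_diag C1 C2 = 0\<^sub>m (w1 + w2) (v1 + v2)"
    using param unfolding retrofit_param_def dims by auto
  have "Q1 \<in> carrier_mat a1 b1" "Q4 \<in> carrier_mat a2 b2" "RH_inf Q1" "RH_inf Q4"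
    using split_block[OF split, of a2 b2] Q \<open>RH_inf Q\<close> by (auto simp: RH_inf_four_block_mat)
  with loop_map_block_diag_split[OF c(1,2,5,6) Q loop split]
    block_diag_sandwich_eq_0_split[OF c(3,4,7,8) Q z split]
  show "\<exists>Q1 \<in> carrier_mat a1 b1. retrofit_param K1 D1 B1 C1 Q1"
    and "\<exists>Q4 \<in> carrier_mat a2 b2. retrofit_param K2 D2 B2 C2 Q4"
    unfolding retrofit_param_def dims by blast+
qed

lemma retrofit_param_diag_mats_iff:
  assumes K: "\<And>i. i < N \<Longrightarrow> K i \<in> carrier_mat (nu i) (ny i)"
    and D: "\<And>i. i < N \<Longrightarrow> D i \<in> carrier_mat (ny i) (nu i)"
    and B: "\<And>i. i < N \<Longrightarrow> B i \<in> carrier_mat (nw i) (nu i)"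
    and C: "\<And>i. i < N \<Longrightarrow> C i \<in> carrier_mat (ny i) (nv i)"
  shows "(\<exists>Q \<in> carrier_mat (\<Sum>i<N. nu i) (\<Sum>i<N. ny i).
            retrofit_param (diag_mats N K) (diag_mats N D) (diag_mats N B) (diag_mats N C) Q)
    \<longleftrightarrow> (\<forall>i<N. \<exists>Q \<in> carrier_mat (nu i) (ny i). retrofit_param (K i) (D i) (B i) (C i) Q)"
proof
  assume "\<exists>Q \<in> carrier_mat (\<Sum>i<N. nu i) (\<Sum>i<N. ny i).
    retrofit_param (diag_mats N K) (diag_mats N D) (diag_mats N B) (diag_mats N C) Q"
  then show "\<forall>i<N. \<exists>Q \<in> carrier_mat (nu i) (ny i). retrofit_param (K i) (D i) (B i) (C i) Q"
    using K D B C
  proof (induction N)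
    case (Suc n)
    then obtain Q where Q: "Q \<in> carrier_mat ((\<Sum>i<n. nu i) + nu n) ((\<Sum>i<n. ny i) + ny n)"
      "retrofit_param (block_diag (diag_mats n K) (K n)) (block_diag (diag_mats n D) (D n))
         (block_diag (diag_mats n B) (B n)) (block_diag (diag_mats n C) (C n)) Q"
      by auto
    have "diag_mats n K \<in> carrier_mat (\<Sum>i<n. nu i) (\<Sum>i<n. ny i)"
      "diag_mats n D \<in> carrier_mat (\<Sum>i<n. ny i) (\<Sum>i<n. nu i)"
      "diag_mats n B \<in> carrier_mat (\<Sum>i<n. nw i) (\<Sum>i<n. nu i)"
      "diag_mats n C \<in> carrier_mat (\<Sum>i<n. ny i) (\<Sum>i<n. nv i)"
      using Suc.prems by (auto intro!: diag_mats_carrier)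
    note split = retrofit_param_block_diag_split[OF this Suc.prems(2-5)[of n] Q, simplified]
    have "\<forall>i<n. \<exists>Q \<in> carrier_mat (nu i) (ny i). retrofit_param (K i) (D i) (B i) (C i) Q"
      using split(1) Suc.prems by (intro Suc.IH) auto
    moreover have "\<exists>Q \<in> carrier_mat (nu n) (ny n). retrofit_param (K n) (D n) (B n) (C n) Q"
      using split(2) Suc.prems by auto
    ultimately show ?case using less_Suc_eq by auto
  qed simp
next
  assume "\<forall>i<N. \<exists>Q \<in> carrier_mat (nu i) (ny i). retrofit_param (K i) (D i) (B i) (C i) Q"
  then have "\<forall>i. \<exists>Q. i < N \<longrightarrow> Q \<in> carrier_mat (nu i) (ny i) \<and> retrofit_param (K i) (D i) (B i) (C i) Q"
    by blast
  from choice[OF this] obtain Q where Q: "\<And>i. i < N \<Longrightarrow> Q i \<in> carrier_mat (nu i) (ny i)"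
    and param: "\<And>i. i < N \<Longrightarrow> retrofit_param (K i) (D i) (B i) (C i) (Q i)"
    by blast
  have "\<And>i. i < N \<Longrightarrow> B i * Q i \<in> carrier_mat (nw i) (ny i)" using B Q by (metis mult_carrier_mat)
  then have "diag_mats N B * diag_mats N Q * diag_mats N C = diag_mats N (\<lambda>i. B i * Q i * C i)"
    using B Q C by (simp add: diag_mats_mult[of N _ nw nu _ ny] diag_mats_mult[of N _ nw ny _ nv])
  also have "\<dots> = diag_mats N (\<lambda>i. 0\<^sub>m (nw i) (nv i))"
  proof (rule diag_mats_cong)
    fix i assume i: "i < N"
    then have "B i * Q i * C i = 0\<^sub>m (dim_row (B i)) (dim_col (C i))"
      using param unfolding retrofit_param_def by blast
    moreover have "dim_row (B i) = nw i" "dim_col (C i) = nv i" using B[OF i] C[OF i] by auto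
    ultimately show "B i * Q i * C i = 0\<^sub>m (nw i) (nv i)" by simp
  qed
  finally have "diag_mats N B * diag_mats N Q * diag_mats N C = 0\<^sub>m (\<Sum>i<N. nw i) (\<Sum>i<N. nv i)"
    by (simp add: diag_mats_zero)
  moreover have "\<And>i. i < N \<Longrightarrow> loop_map (K i) (D i) (Q i)" "\<And>i. i < N \<Longrightarrow> RH_inf (Q i)"
    using param unfolding retrofit_param_def by blast+
  then have "loop_map (diag_mats N K) (diag_mats N D) (diag_mats N Q)" "RH_inf (diag_mats N Q)"
    by (auto intro!: loop_map_diag_mats[OF K D Q] RH_inf_diag_mats)
  moreover have "dim_row (diag_mats N B) = (\<Sum>i<N. nw i)" "dim_col (diag_mats N C) = (\<Sum>i<N. nv i)"
    using diag_mats_carrier[of N B nw nu] diag_mats_carrier[of N C ny nv] B C by auto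
  moreover have "diag_mats N Q \<in> carrier_mat (\<Sum>i<N. nu i) (\<Sum>i<N. ny i)"
    using Q by (rule diag_mats_carrier)
  ultimately show "\<exists>Q \<in> carrier_mat (\<Sum>i<N. nu i) (\<Sum>i<N. ny i).
    retrofit_param (diag_mats N K) (diag_mats N D) (diag_mats N B) (diag_mats N C) Q"
    unfolding retrofit_param_def by (intro bexI[of _ "diag_mats N Q"]) simp_all
qed

text \<open>The right-hand side says K = inverse (I + Q D) Q: Q is the Youla parameter of K.\<close>

lemma loop_map_iff_youla:
  fixes K D Q :: "'a :: ring_1 mat"
  assumes K: "K \<in> carrier_mat nu ny" and D: "D \<in> carrier_mat ny nu" and Q: "Q \<in> carrier_mat nu ny"
  shows "loop_map K D Q \<longleftrightarrow>
    (\<exists>M \<in> carrier_mat nu nu. M * (1\<^sub>m nu + Q * D) = 1\<^sub>m nu \<and> (1\<^sub>m nu + Q * D) * M = 1\<^sub>m nu \<and> K = M * Q)"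
proof
  assume "loop_map K D Q"
  then have k1: "Q = K + K * D * Q" and k2: "Q = K + Q * D * K" unfolding loop_map_def by blast+
  define M where "M = 1\<^sub>m nu + - (K * D)"
  have z1: "Q + - K + - (K * D * Q) = 0\<^sub>m nu ny" by (subst (1) k1) (use K D Q in \<open>simp add: mat_ring_simps\<close>)
  have z2: "Q + - K + - (Q * D * K) = 0\<^sub>m nu ny" by (subst (1) k2) (use K D Q in \<open>simp add: mat_ring_simps\<close>)
  have "M * (1\<^sub>m nu + Q * D) = 1\<^sub>m nu + (Q + - K + - (K * D * Q)) * D"
    unfolding M_def using K D Q by (simp add: mat_ring_simps)
  then have left: "M * (1\<^sub>m nu + Q * D) = 1\<^sub>m nu" using z1 D by simp
  have "(1\<^sub>m nu + Q * D) * M = 1\<^sub>m nu + (Q + - K + - (Q * D * K)) * D"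
    unfolding M_def using K D Q by (simp add: mat_ring_simps)
  then have right: "(1\<^sub>m nu + Q * D) * M = 1\<^sub>m nu" using z2 D by simp
  have "M * Q = Q + - (K * D * Q)" unfolding M_def using K D Q by (simp add: mat_ring_simps)
  also have "\<dots> = (K + K * D * Q) + - (K * D * Q)" by (subst (1) k1) (rule refl)
  also have "\<dots> = K" using K D Q by (simp add: mat_ring_simps)
  finally have "K = M * Q" ..
  moreover have "M \<in> carrier_mat nu nu" unfolding M_def using K D by auto
  ultimately show "\<exists>M \<in> carrier_mat nu nu. M * (1\<^sub>m nu + Q * D) = 1\<^sub>m nu \<and>
    (1\<^sub>m nu + Q * D) * M = 1\<^sub>m nu \<and> K = M * Q" using left right by blast
next
  assume "\<exists>M \<in> carrier_mat nu nu. M * (1\<^sub>m nu + Q * D) = 1\<^sub>m nu \<and>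
    (1\<^sub>m nu + Q * D) * M = 1\<^sub>m nu \<and> K = M * Q"
  then obtain M where M: "M \<in> carrier_mat nu nu" and left: "M * (1\<^sub>m nu + Q * D) = 1\<^sub>m nu"
    and right: "(1\<^sub>m nu + Q * D) * M = 1\<^sub>m nu" and K_eq: "K = M * Q" by blast
  have "K + K * D * Q = M * (1\<^sub>m nu + Q * D) * Q" unfolding K_eq using Q M D by (simp add: mat_ring_simps)
  also have "\<dots> = Q" using left Q by simp
  finally have "Q = K + K * D * Q" ..
  have "K + Q * D * K = (1\<^sub>m nu + Q * D) * M * Q" unfolding K_eq using Q M D by (simp add: mat_ring_simps)
  also have "\<dots> = Q" using right Q by simp
  finally have "Q = K + Q * D * K" ..
  with \<open>Q = K + K * D * Q\<close> show "loop_map K D Q" unfolding loop_map_def ..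
qed

lemma retrofit_param_iff_youla:
  assumes K: "K \<in> carrier_mat nu ny" and D: "D \<in> carrier_mat ny nu"
    and B: "B \<in> carrier_mat nw nu" and C: "C \<in> carrier_mat ny nv"
  shows "(\<exists>Q \<in> carrier_mat nu ny. retrofit_param K D B C Q) \<longleftrightarrow>
    (\<exists>Q M. Q \<in> carrier_mat nu ny \<and> RH_inf Q \<and> M \<in> carrier_mat nu nu
       \<and> M * (1\<^sub>m nu + Q * D) = 1\<^sub>m nu \<and> (1\<^sub>m nu + Q * D) * M = 1\<^sub>m nu \<and> K = M * Q
       \<and> B * Q * C = 0\<^sub>m nw nv)"
proof -
  have dims: "dim_row B = nw" "dim_col C = nv" using B C by auto
  have "retrofit_param K D B C Q \<longleftrightarrow> RH_inf Q \<and> (\<exists>M \<in> carrier_mat nu nu. M * (1\<^sub>m nu + Q * D) = 1\<^sub>m nu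
      \<and> (1\<^sub>m nu + Q * D) * M = 1\<^sub>m nu \<and> K = M * Q) \<and> B * Q * C = 0\<^sub>m nw nv"
    if "Q \<in> carrier_mat nu ny" for Q
    unfolding retrofit_param_def dims loop_map_iff_youla[OF K D that] ..
  then show ?thesis by blast
qed

lemma subsystem_blocks_carrier [simp]:
  "Gwu nw nz ny nv nd nu G \<in> carrier_mat nw nu" "Gyv nw nz ny nv nd nu G \<in> carrier_mat ny nv"
  "Gyu nw nz ny nv nd nu G \<in> carrier_mat ny nu"
  by (simp_all add: Gwu_def Gyv_def Gyu_def)

lemma stable_plant_subsystem:
  assumes "G \<in> carrier_mat (nw + nz + ny) (nv + nd + nu)" "RH_inf G"
  shows "stable_plant nw nz ny nv nd nu
    (Gwv nw nz ny nv nd nu G) (Gwd nw nz ny nv nd nu G) (Gwu nw nz ny nv nd nu G)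
    (Gzv nw nz ny nv nd nu G) (Gzd nw nz ny nv nd nu G) (Gzu nw nz ny nv nd nu G)
    (Gyv nw nz ny nv nd nu G) (Gyd nw nz ny nv nd nu G) (Gyu nw nz ny nv nd nu G)"
  unfolding stable_plant_def Gwv_def Gwd_def Gwu_def Gzv_def Gzd_def Gzu_def Gyv_def Gyd_def Gyu_def
  using assms by (auto intro!: RH_inf_blk)

lemma retrofit_iff_retrofit_param:
  assumes G: "G \<in> carrier_mat (nw + nz + ny) (nv + nd + nu)" "RH_inf G" and K: "K \<in> carrier_mat nu ny"
  shows "retrofit nw nz ny nv nd nu G K \<longleftrightarrow> (\<exists>Q \<in> carrier_mat nu ny.
    retrofit_param K (Gyu nw nz ny nv nd nu G) (Gwu nw nz ny nv nd nu G) (Gyv nw nz ny nv nd nu G) Q)"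
proof -
  interpret stable_plant nw nz ny nv nd nu
    "Gwv nw nz ny nv nd nu G" "Gwd nw nz ny nv nd nu G" "Gwu nw nz ny nv nd nu G"
    "Gzv nw nz ny nv nd nu G" "Gzd nw nz ny nv nd nu G" "Gzu nw nz ny nv nd nu G"
    "Gyv nw nz ny nv nd nu G" "Gyd nw nz ny nv nd nu G" "Gyu nw nz ny nv nd nu G"
    by (rule stable_plant_subsystem[OF G])
  have dims: "dim_row (Gwu nw nz ny nv nd nu G) = nw" "dim_col (Gyv nw nz ny nv nd nu G) = nv"
    unfolding Gwu_def Gyv_def blk_def by simp_all
  show ?thesis
    unfolding retrofit_def retrofit_param_def dims by (rule loop_stable_for_all_iff[OF K])
qed

lemma network_stable_for_all_iff_retrofit_param:
  assumes G_dim: "\<forall>i<N. G i \<in> carrier_mat (nw i + nz i + ny i) (nv i + nd i + nu i)"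
    and G_stable: "\<forall>i<N. RH_inf (G i)"
    and K_dim: "\<forall>i<N. K i \<in> carrier_mat (nu i) (ny i)"
  shows "(\<forall>L. L \<in> carrier_mat (\<Sum>i<N. nv i) (\<Sum>i<N. nw i) \<and> proper_mat L
              \<and> pre_stable N nw nz ny nv nd nu G L \<longrightarrow> network_stable N nw nz ny nv nd nu G K L)
    \<longleftrightarrow> (\<exists>Q \<in> carrier_mat (\<Sum>i<N. nu i) (\<Sum>i<N. ny i). retrofit_param (diag_mats N K)
          (diagG N nw nz ny nv nd nu G Gyu) (diagG N nw nz ny nv nd nu G Gwu)
          (diagG N nw nz ny nv nd nu G Gyv) Q)"
proof -
  have sub: "stable_plant (nw i) (nz i) (ny i) (nv i) (nd i) (nu i)
    (Gwv (nw i) (nz i) (ny i) (nv i) (nd i) (nu i) (G i)) (Gwd (nw i) (nz i) (ny i) (nv i) (nd i) (nu i) (G i))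
    (Gwu (nw i) (nz i) (ny i) (nv i) (nd i) (nu i) (G i)) (Gzv (nw i) (nz i) (ny i) (nv i) (nd i) (nu i) (G i))
    (Gzd (nw i) (nz i) (ny i) (nv i) (nd i) (nu i) (G i)) (Gzu (nw i) (nz i) (ny i) (nv i) (nd i) (nu i) (G i))
    (Gyv (nw i) (nz i) (ny i) (nv i) (nd i) (nu i) (G i)) (Gyd (nw i) (nz i) (ny i) (nv i) (nd i) (nu i) (G i))
    (Gyu (nw i) (nz i) (ny i) (nv i) (nd i) (nu i) (G i))" if "i < N" for i
    using stable_plant_subsystem G_dim G_stable that by blast
  interpret stable_plant "\<Sum>i<N. nw i" "\<Sum>i<N. nz i" "\<Sum>i<N. ny i" "\<Sum>i<N. nv i" "\<Sum>i<N. nd i" "\<Sum>i<N. nu i"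
    "diagG N nw nz ny nv nd nu G Gwv" "diagG N nw nz ny nv nd nu G Gwd" "diagG N nw nz ny nv nd nu G Gwu"
    "diagG N nw nz ny nv nd nu G Gzv" "diagG N nw nz ny nv nd nu G Gzd" "diagG N nw nz ny nv nd nu G Gzu"
    "diagG N nw nz ny nv nd nu G Gyv" "diagG N nw nz ny nv nd nu G Gyd" "diagG N nw nz ny nv nd nu G Gyu"
    unfolding stable_plant_def diagG_def
    using sub by (auto simp: stable_plant_def intro!: diag_mats_carrier RH_inf_diag_mats)
  have K: "diag_mats N K \<in> carrier_mat (\<Sum>i<N. nu i) (\<Sum>i<N. ny i)"
    using K_dim by (auto intro!: diag_mats_carrier)
  have dims: "dim_row (diagG N nw nz ny nv nd nu G Gwu) = (\<Sum>i<N. nw i)"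
    "dim_col (diagG N nw nz ny nv nd nu G Gyv) = (\<Sum>i<N. nv i)"
    using carrier(3,7) by auto
  show ?thesis
    unfolding pre_stable_def network_stable_def retrofit_param_def dims
    by (rule loop_stable_for_all_iff[OF K])
qed

theorem theorem3:
  fixes N :: nat and nw nz ny nv nd nu :: "nat \<Rightarrow> nat"
    and G K :: "nat \<Rightarrow> tf mat"
  assumes G_dim: "\<forall>i<N. G i \<in> carrier_mat (nw i + nz i + ny i) (nv i + nd i + nu i)"
    and G_stable: "\<forall>i<N. RH_inf (G i)"
    and K_dim: "\<forall>i<N. K i \<in> carrier_mat (nu i) (ny i)"
    and K_proper: "\<forall>i<N. proper_mat (K i)"
  shows "((\<forall>L. L \<in> carrier_mat (\<Sum>i<N. nv i) (\<Sum>i<N. nw i) \<and> proper_mat L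
              \<and> pre_stable N nw nz ny nv nd nu G L
              \<longrightarrow> network_stable N nw nz ny nv nd nu G K L)
          \<longleftrightarrow> (\<forall>i<N. retrofit (nw i) (nz i) (ny i) (nv i) (nd i) (nu i) (G i) (K i)))
       \<and> ((\<forall>i<N. retrofit (nw i) (nz i) (ny i) (nv i) (nd i) (nu i) (G i) (K i))
          \<longleftrightarrow> (\<forall>i<N. \<exists>Q M. Q \<in> carrier_mat (nu i) (ny i) \<and> RH_inf Q
                 \<and> M \<in> carrier_mat (nu i) (nu i)
                 \<and> M * (1\<^sub>m (nu i) + Q * Gyu (nw i) (nz i) (ny i) (nv i) (nd i) (nu i) (G i)) = 1\<^sub>m (nu i)
                 \<and> (1\<^sub>m (nu i) + Q * Gyu (nw i) (nz i) (ny i) (nv i) (nd i) (nu i) (G i)) * M = 1\<^sub>m (nu i)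
                 \<and> K i = M * Q
                 \<and> Gwu (nw i) (nz i) (ny i) (nv i) (nd i) (nu i) (G i) * Q
                     * Gyv (nw i) (nz i) (ny i) (nv i) (nd i) (nu i) (G i) = 0\<^sub>m (nw i) (nv i)))"
proof -
  let ?param = "\<lambda>i. \<exists>Q \<in> carrier_mat (nu i) (ny i). retrofit_param (K i)
      (Gyu (nw i) (nz i) (ny i) (nv i) (nd i) (nu i) (G i)) (Gwu (nw i) (nz i) (ny i) (nv i) (nd i) (nu i) (G i))
      (Gyv (nw i) (nz i) (ny i) (nv i) (nd i) (nu i) (G i)) Q"
  have network: "(\<forall>L. L \<in> carrier_mat (\<Sum>i<N. nv i) (\<Sum>i<N. nw i) \<and> proper_mat L
      \<and> pre_stable N nw nz ny nv nd nu G L \<longrightarrow> network_stable N nw nz ny nv nd nu G K L)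
    \<longleftrightarrow> (\<forall>i<N. ?param i)"
    unfolding network_stable_for_all_iff_retrofit_param[OF G_dim G_stable K_dim] diagG_def
    by (rule retrofit_param_diag_mats_iff[of N K nu ny _ _ nw _ nv]) (use K_dim in auto)
  have retrofit_i: "retrofit (nw i) (nz i) (ny i) (nv i) (nd i) (nu i) (G i) (K i) \<longleftrightarrow> ?param i"
    if "i < N" for i
    using retrofit_iff_retrofit_param G_dim G_stable K_dim that by blast
  have youla_i: "?param i \<longleftrightarrow> (\<exists>Q M. Q \<in> carrier_mat (nu i) (ny i) \<and> RH_inf Q
                 \<and> M \<in> carrier_mat (nu i) (nu i)
                 \<and> M * (1\<^sub>m (nu i) + Q * Gyu (nw i) (nz i) (ny i) (nv i) (nd i) (nu i) (G i)) = 1\<^sub>m (nu i)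
                 \<and> (1\<^sub>m (nu i) + Q * Gyu (nw i) (nz i) (ny i) (nv i) (nd i) (nu i) (G i)) * M = 1\<^sub>m (nu i)
                 \<and> K i = M * Q
                 \<and> Gwu (nw i) (nz i) (ny i) (nv i) (nd i) (nu i) (G i) * Q
                     * Gyv (nw i) (nz i) (ny i) (nv i) (nd i) (nu i) (G i) = 0\<^sub>m (nw i) (nv i))"
    if "i < N" for i
    by (rule retrofit_param_iff_youla) (use K_dim that in simp_all)
  show ?thesis by (simp add: network retrofit_i youla_i)
qed

end
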